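(* Let $T$ be a binary tree rooted at $O$, and let $p\in(0,1]$ be the common activation probability of all edges. Against every depth-first strategy $s$ of the searcher, the equal branching density $\varepsilon^*$ of the hider yields the same payoff, namely $$g(\varepsilon^*,s)=\frac12\tau(O)+\Lambda(O).$$
   Context: Setting: the stochastic search game on a finite tree $T$ rooted at $O$. Every edge has length $1$ and is active at each stage independently with the same probability $p\in(0,1]$. The hider picks an edge and stays there. The searcher, starting at $O$ and observing which edges are currently active, at each stage either waits or traverses an active edge incident to her position. The hider's payoff $g(\varepsilon,s)$ is the expected first time the searcher traverses the hider's edge. Orient the edges away from $O$. For a vertex $v$, $T_v$ is the subtree rooted at $v$ consisting of all edges below $v$. For an edge $e=(u,w)$, $T_e$ is $\{e\}\cup T_w$, rooted at $u$, and $E_e$ is its edge set. A leaf edge is an edge whose head has no outgoing edge. $T$ is binary if every vertex has at most two outgoing edges. A depth-first strategy (DFS) acts as follows at the searcher's current vertex: - if some untraversed outgoing edge is active, traverse one of them (possibly chosen at random); - if all untraversed outgoing edges are inactive, wait; - if all outgoing edges have been traversed, traverse the edge back toward $O$ if it is active, and wait otherwise. Cycle time: for a vertex or edge $z$, $\tau(z)$ is the expected time for a DFS on $T_z$, started at its root, to traverse every edge of $T_z$ and return to the root. It does not depend on the DFS. Equivalently, for binary trees: - $\tau(v)=0$ if $v$ has no outgoing edge; - $\tau(e)=\tau(w)+2/p$ for $e=(u,w)$; - $\tau(v)=\tau(e)$ if $v$ has exactly one outgoing edge $e$; - $\tau(v)=\tau(w_1)+\tau(w_2)+3/p+1/(1-(1-p)^2)$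 if $v$ has outgoing edges to $w_1,w_2$. The equal branching density $\varepsilon^*$ is the unique probability distribution on $E$ such that: - it is supported on the leaf edges; - at every vertex with two outgoing edges $e_1,e_2$, $\varepsilon^*(E_{e_1})/\tau(e_1)=\varepsilon^*(E_{e_2})/\tau(e_2)$. The function $\Lambda$ is defined recursively on rooted binary trees. Write $\Lambda(v)=\Lambda(T_v)$ and $\Lambda(e)=\Lambda(T_e)$. - $\Lambda(v)=0$ if $v$ has no outgoing edge. - If the root $r$ has a single outgoing edge $e=(r,w)$, then $\Lambda(r)=\Lambda(e)=\Lambda(w)$. - If $r$ has two outgoing edges $e_1=(r,w_1)$ and $e_2=(r,w_2)$, then $$\Lambda(r)=\frac{\tau(e_1)}{\tau(e_1)+\tau(e_2)}\Lambda(w_1)+\frac{\tau(e_2)}{\tau(e_1)+\tau(e_2)}\Lambda(w_2)+\frac12\Big(\frac1{1-(1-p)^2}-\frac1p\Big).$$ *)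

theory Defs
  imports "HOL-Probability.Probability"
begin

datatype btree = Leaf | Node1 btree | Node2 btree btree

(* Vertices are addressed by paths from the root O = []; child of v is v @ [d].
   An edge (u,w) is identified with its head w (a nonempty path), its tail is butlast w. *)
type_synonym vtx = "nat list"

fun verts :: "btree \<Rightarrow> vtx set" where
  "verts Leaf = {[]}"
| "verts (Node1 t) = insert [] (Cons 0 ` verts t)"
| "verts (Node2 l r) = insert [] (Cons 0 ` verts l \<union> Cons 1 ` verts r)"

definition edges :: "btree \<Rightarrow> vtx set" where
  "edges t = verts t - {[]}"

definition children :: "btree \<Rightarrow> vtx \<Rightarrow> vtx set" where
  "children t v = {c \<in> verts t. \<exists>d. c = v @ [d]}"

fun subt :: "btree \<Rightarrow> vtx \<Rightarrow> btree" where
  "subt t [] = t"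
| "subt (Node1 t) (0 # v) = subt t v"
| "subt (Node2 l r) (0 # v) = subt l v"
| "subt (Node2 l r) (Suc 0 # v) = subt r v"
| "subt _ _ = Leaf"

definition Esub :: "btree \<Rightarrow> vtx \<Rightarrow> vtx set" where
  "Esub t e = {x \<in> edges t. \<exists>w. x = e @ w}"

definition leaf_edges :: "btree \<Rightarrow> vtx set" where
  "leaf_edges t = {e \<in> edges t. children t e = {}}"

(* cycle time tau, via the recursion for binary trees *)
fun tau :: "real \<Rightarrow> btree \<Rightarrow> real" where
  "tau p Leaf = 0"
| "tau p (Node1 t) = tau p t + 2 / p"
| "tau p (Node2 l r) = tau p l + tau p r + 3 / p + 1 / (1 - (1 - p)^2)"

definition tau_edge :: "real \<Rightarrow> btree \<Rightarrow> vtx \<Rightarrow> real" where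
  "tau_edge p t e = tau p (subt t e) + 2 / p"

fun Lam :: "real \<Rightarrow> btree \<Rightarrow> real" where
  "Lam p Leaf = 0"
| "Lam p (Node1 t) = Lam p t"
| "Lam p (Node2 l r) =
     (tau p l + 2/p) / ((tau p l + 2/p) + (tau p r + 2/p)) * Lam p l
   + (tau p r + 2/p) / ((tau p l + 2/p) + (tau p r + 2/p)) * Lam p r
   + 1/2 * (1 / (1 - (1 - p)^2) - 1 / p)"

(* hider mixed strategies: probability distributions on the edge set *)
definition is_edge_dist :: "btree \<Rightarrow> (vtx \<Rightarrow> real) \<Rightarrow> bool" where
  "is_edge_dist t \<epsilon> \<longleftrightarrow> (\<forall>x. 0 \<le> \<epsilon> x) \<and> (\<forall>x. x \<notin> edges t \<longrightarrow> \<epsilon> x = 0)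
      \<and> sum \<epsilon> (edges t) = 1"

definition is_equal_branching :: "real \<Rightarrow> btree \<Rightarrow> (vtx \<Rightarrow> real) \<Rightarrow> bool" where
  "is_equal_branching p t \<epsilon> \<longleftrightarrow> is_edge_dist t \<epsilon>
     \<and> (\<forall>x. x \<notin> leaf_edges t \<longrightarrow> \<epsilon> x = 0)
     \<and> (\<forall>v e1 e2. v \<in> verts t \<and> e1 \<in> children t v \<and> e2 \<in> children t v \<and> e1 \<noteq> e2 \<longrightarrow>
          sum \<epsilon> (Esub t e1) / tau_edge p t e1 = sum \<epsilon> (Esub t e2) / tau_edge p t e2)"

definition eps_star :: "real \<Rightarrow> btree \<Rightarrow> vtx \<Rightarrow> real" where
  "eps_star p t = (THE \<epsilon>. is_equal_branching p t \<epsilon>)"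

(* history: for each stage, the set of active edges observed and the searcher's
   position after that stage's move *)
type_synonym hist = "(vtx set \<times> vtx) list"

(* behaviour strategy of the searcher: given the history and the currently active
   edges, a distribution over her next position (staying = waiting) *)
type_synonym strategy = "hist \<Rightarrow> vtx set \<Rightarrow> vtx pmf"

definition positions :: "hist \<Rightarrow> vtx list" where
  "positions h = [] # map snd h"

definition pos :: "hist \<Rightarrow> vtx" where
  "pos h = last (positions h)"

definition traversed :: "hist \<Rightarrow> vtx set" where
  "traversed h = {e. e \<noteq> [] \<and> (\<exists>i < length h.
      {positions h ! i, positions h ! Suc i} = {e, butlast e})}"

definition act_pmf :: "btree \<Rightarrow> real \<Rightarrow> vtx set pmf" where
  "act_pmf t p = map_pmf (\<lambda>f. {e. f e}) (Pi_pmf (edges t) False (\<lambda>_. bernoulli_pmf p))"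

primrec hist_dist :: "btree \<Rightarrow> real \<Rightarrow> strategy \<Rightarrow> nat \<Rightarrow> hist pmf" where
  "hist_dist t p \<sigma> 0 = return_pmf []"
| "hist_dist t p \<sigma> (Suc n) =
     bind_pmf (hist_dist t p \<sigma> n) (\<lambda>h. bind_pmf (act_pmf t p)
        (\<lambda>A. map_pmf (\<lambda>x. h @ [(A, x)]) (\<sigma> h A)))"

definition dfs_moves :: "btree \<Rightarrow> vtx \<Rightarrow> vtx set \<Rightarrow> vtx set \<Rightarrow> vtx set" where
  "dfs_moves t v S A =
    (let U = children t v - S in
     if U \<inter> A \<noteq> {} then U \<inter> A
     else if U \<noteq> {} then {v}
     else if v \<noteq> [] \<and> v \<in> A then {butlast v}
     else {v})"

definition is_dfs :: "btree \<Rightarrow> strategy \<Rightarrow> bool" where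
  "is_dfs t \<sigma> \<longleftrightarrow> (\<forall>h A. set_pmf (\<sigma> h A) \<subseteq> dfs_moves t (pos h) (traversed h) A)"

(* expected first traversal time of edge e: E[T_e] = sum_{k>=0} P(T_e > k),
   where stage k (k = 1,2,...) ends at time k *)
definition exp_time :: "btree \<Rightarrow> real \<Rightarrow> strategy \<Rightarrow> vtx \<Rightarrow> ennreal" where
  "exp_time t p \<sigma> e =
     (\<Sum>k. ennreal (measure_pmf.prob (hist_dist t p \<sigma> k) {h. e \<notin> traversed h}))"

definition payoff :: "btree \<Rightarrow> real \<Rightarrow> (vtx \<Rightarrow> real) \<Rightarrow> strategy \<Rightarrow> ennreal" where
  "payoff t p \<epsilon> \<sigma> = (\<Sum>e\<in>edges t. ennreal (\<epsilon> e) * exp_time t p \<sigma> e)"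

end

theory Submission
  imports Defs
begin

text \<open>
  A depth-first search is described by its state \<open>(v, S)\<close>: the searcher stands at \<open>v\<close>, \<open>S\<close> is
  the set of traversed edges, and every subtree hanging off the path from \<open>O\<close> to \<open>v\<close> is either
  untouched or completely traversed. Against \<open>\<epsilon>\<^sup>*\<close> the payoff is \<open>\<Sum>\<^sub>k E[R(S\<^sub>k)]\<close>, where \<open>R(S)\<close>
  is the \<open>\<epsilon>\<^sup>*\<close>-mass of the untraversed edges. We write down the payoff still to come as an
  explicit potential \<open>C(v, S)\<close> and check that a single stage of any DFS lowers its expectation by
  exactly \<open>R(S)\<close>. The key point is that \<open>\<epsilon>\<^sup>*\<close> splits its mass at a binary vertex in proportion
  to the cycle times of the two branches, so it does not matter which branch is entered first.
  As \<open>C \<le> K R\<close>, the potential is used up, hence the payoff is \<open>C(O, \<emptyset>) = \<tau>(O)/2 + \<Lambda>(O)\<close>.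
\<close>

section \<open>Paths in binary trees\<close>

lemma Nil_in_verts [simp]: "[] \<in> verts t"
  by (cases t) auto

lemma finite_verts [simp]: "finite (verts t)"
  by (induction t) auto

lemma Cons_in_verts_Node1 [simp]: "d # w \<in> verts (Node1 s) \<longleftrightarrow> d = 0 \<and> w \<in> verts s"
  by auto

lemma Cons_in_verts_Node2 [simp]:
  "d # w \<in> verts (Node2 l r) \<longleftrightarrow> (d = 0 \<and> w \<in> verts l) \<or> (d = 1 \<and> w \<in> verts r)"
  by auto

declare verts.simps(2,3) [simp del]

lemma snoc_in_vertsD: "v @ [d] \<in> verts t \<Longrightarrow> v \<in> verts t \<and> d \<le> 1"
proof (induction t arbitrary: v)
  case (Node2 l r)
  then show ?case
    by (cases v) (auto simp: verts.simps)
qed (case_tac v; auto)+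

lemma first_child_in_verts: "s \<noteq> Leaf \<Longrightarrow> [0] \<in> verts s"
  by (cases s) auto

lemma in_edges_iff: "w \<in> edges s \<longleftrightarrow> w \<in> verts s \<and> w \<noteq> []"
  by (auto simp: edges_def)

lemma Nil_notin_edges [simp]: "[] \<notin> edges s"
  by (simp add: edges_def)

lemma finite_edges [simp]: "finite (edges t)"
  by (simp add: edges_def)

lemma edges_Leaf [simp]: "edges Leaf = {}"
  by (simp add: edges_def)

lemma edges_Node1: "edges (Node1 s) = Cons 0 ` verts s"
  by (auto simp: edges_def verts.simps)

lemma edges_Node2: "edges (Node2 l r) = Cons 0 ` verts l \<union> Cons 1 ` verts r"
  by (auto simp: edges_def verts.simps)

lemma children_iff: "c \<in> children t v \<longleftrightarrow> (\<exists>d. c = v @ [d] \<and> v @ [d] \<in> verts t)"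
  unfolding children_def by auto

lemma sum_verts: "sum f (verts s) = f [] + sum f (edges s)"
proof -
  have "verts s = insert [] (edges s)"
    by (auto simp: edges_def)
  then show ?thesis
    by simp
qed

lemma sum_Cons_image: "sum f (Cons d ` A) = sum (\<lambda>w. f (d # w)) A"
  by (subst sum.reindex) (auto simp: inj_on_def)

lemma sum_edges_Node1: "sum f (edges (Node1 s)) = f [0] + sum (\<lambda>w. f (0 # w)) (edges s)"
  unfolding edges_Node1 sum_Cons_image sum_verts by simp

lemma sum_edges_Node2:
  "sum f (edges (Node2 l r)) =
     f [0] + sum (\<lambda>w. f (0 # w)) (edges l) + (f [1] + sum (\<lambda>w. f (1 # w)) (edges r))"
proof -
  have "Cons 0 ` verts l \<inter> Cons 1 ` verts r = {}"
    by auto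
  then have "sum f (edges (Node2 l r)) = sum f (Cons 0 ` verts l) + sum f (Cons 1 ` verts r)"
    unfolding edges_Node2 by (simp add: sum.union_disjoint)
  then show ?thesis
    unfolding sum_Cons_image sum_verts by simp
qed

definition child_part :: "nat \<Rightarrow> vtx set \<Rightarrow> vtx set" where
  "child_part d S = {w. d # w \<in> S}"

lemma in_child_part_iff [simp]: "w \<in> child_part d S \<longleftrightarrow> d # w \<in> S"
  by (simp add: child_part_def)

lemma child_part_insert_same [simp]: "child_part d (insert (d # w) S) = insert w (child_part d S)"
  by (auto simp: child_part_def)

lemma child_part_insert_other [simp]: "d \<noteq> d' \<Longrightarrow> child_part d (insert (d' # w) S) = child_part d S"
  by (auto simp: child_part_def)

lemma child_part_insert_Nil: "child_part d (insert [d] S) = insert [] (child_part d S)"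
  by simp


section \<open>Cycle times and branching weights\<close>

definition tau_branch :: "real \<Rightarrow> btree \<Rightarrow> real" where
  "tau_branch p s = tau p s + 2 / p"

definition either_active :: "real \<Rightarrow> real" where
  "either_active p = 1 - (1 - p)^2"

definition wt_left :: "real \<Rightarrow> btree \<Rightarrow> btree \<Rightarrow> real" where
  "wt_left p l r = tau_branch p l / (tau_branch p l + tau_branch p r)"

definition wt_right :: "real \<Rightarrow> btree \<Rightarrow> btree \<Rightarrow> real" where
  "wt_right p l r = tau_branch p r / (tau_branch p l + tau_branch p r)"

lemma either_active_pos:
  assumes "0 < p" "p \<le> 1"
  shows "0 < either_active p"
proof -
  have "(1 - p) * (1 - p) \<le> 1 * (1 - p)"
    by (rule mult_right_mono) (use assms in auto)
  then have "(1 - p) * (1 - p) \<le> 1 - p"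
    by simp
  then show ?thesis
    unfolding either_active_def power2_eq_square using assms by linarith
qed

lemma tau_Node2: "tau p (Node2 l r) = tau p l + tau p r + 3 / p + 1 / either_active p"
  by (simp add: either_active_def)

lemma tau_nonneg: "0 < p \<Longrightarrow> p \<le> 1 \<Longrightarrow> 0 \<le> tau p t"
proof (induction t)
  case (Node2 l r)
  then show ?case
    using either_active_pos[OF Node2.prems] by (simp add: tau_Node2 del: tau.simps)
qed auto

lemma tau_branch_pos: "0 < p \<Longrightarrow> p \<le> 1 \<Longrightarrow> 0 < tau_branch p s"
  using tau_nonneg[of p s] unfolding tau_branch_def by (simp add: add_nonneg_pos)

lemma branch_weights:
  assumes "0 < p" "p \<le> 1"
  shows "0 < wt_left p l r" "0 < wt_right p l r" "wt_left p l r + wt_right p l r = 1"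
    "wt_right p l r * tau_branch p l = wt_left p l r * tau_branch p r"
proof -
  have pos: "0 < tau_branch p l" "0 < tau_branch p r"
    using tau_branch_pos[OF assms] by auto
  show "0 < wt_left p l r" "0 < wt_right p l r"
    using pos by (auto simp: wt_left_def wt_right_def)
  show "wt_left p l r + wt_right p l r = 1"
    using pos by (simp add: wt_left_def wt_right_def add_divide_distrib[symmetric])
  show "wt_right p l r * tau_branch p l = wt_left p l r * tau_branch p r"
    unfolding wt_left_def wt_right_def by (simp add: ac_simps)
qed

lemma branch_weights_mix: "0 < p \<Longrightarrow> p \<le> 1 \<Longrightarrow> wt_left p l r * x + wt_right p l r * x = x"
  using branch_weights(3)[of p l r] by (metis distrib_right mult_1)

text \<open>
  The payoff of \<open>\<epsilon>\<^sup>*\<close> against a DFS started from scratch, defined by the recursion that the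
  search itself suggests; it equals \<open>\<tau>/2 + \<Lambda>\<close>.\<close>

fun fresh_cost :: "real \<Rightarrow> btree \<Rightarrow> real" where
  "fresh_cost p Leaf = 0"
| "fresh_cost p (Node1 s) = 1 / p + fresh_cost p s"
| "fresh_cost p (Node2 l r) = 1 / either_active p - 1 / p
     + wt_left p l r * (1 / p + fresh_cost p l) + wt_right p l r * (1 / p + fresh_cost p r)
     + wt_right p l r * tau_branch p l"

lemma fresh_cost_Node2_eq:
  "0 < p \<Longrightarrow> p \<le> 1 \<Longrightarrow> fresh_cost p (Node2 l r) = 1 / either_active p
     + wt_left p l r * fresh_cost p l + wt_right p l r * fresh_cost p r + wt_right p l r * tau_branch p l"
  using branch_weights_mix[of p l r "1/p"] by (simp add: algebra_simps)

lemma fresh_cost_nonneg: "0 < p \<Longrightarrow> p \<le> 1 \<Longrightarrow> 0 \<le> fresh_cost p t"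
proof (induction t)
  case (Node2 l r)
  have "0 < wt_left p l r" "0 < wt_right p l r" "0 < 1 / either_active p" "0 < tau_branch p l"
    using branch_weights[OF Node2.prems] either_active_pos[OF Node2.prems]
      tau_branch_pos[OF Node2.prems] by auto
  then show ?case
    using Node2 by (simp add: fresh_cost_Node2_eq del: fresh_cost.simps)
qed auto

lemma fresh_cost_eq_tau_Lam: "0 < p \<Longrightarrow> p \<le> 1 \<Longrightarrow> fresh_cost p t = tau p t / 2 + Lam p t"
proof (induction t)
  case (Node2 l r)
  have w: "wt_left p l r + wt_right p l r = 1"
    "wt_right p l r * (tau p l + 2/p) = wt_left p l r * (tau p r + 2/p)"
    using branch_weights[OF Node2.prems] by (auto simp: tau_branch_def)
  have Lam: "Lam p (Node2 l r) = wt_left p l r * Lam p l + wt_right p l r * Lam p r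
      + 1/2 * (1 / either_active p - 1 / p)"
    by (simp add: wt_left_def wt_right_def either_active_def tau_branch_def)
  have "1/q - 1/p + a*(1/p + (x/2 + L1)) + b*(1/p + (y/2 + L2)) + b*(x + 2/p)
      = (x + y + 3/p + 1/q)/2 + (a*L1 + b*L2 + 1/2 * (1/q - 1/p))"
    if "(a::real) + b = 1" "b*(x + 2/p) = a*(y + 2/p)" for a b x y q L1 L2
    using that by algebra
  from this[OF w] show ?case
    unfolding Lam using Node2 by (simp add: tau_branch_def either_active_def)
qed (auto simp: tau_branch_def)

section \<open>Depth-first states and the cost potential\<close>

definition settled :: "btree \<Rightarrow> nat \<Rightarrow> vtx set \<Rightarrow> bool" where
  "settled s d S \<longleftrightarrow> (\<forall>w\<in>verts s. d # w \<notin> S) \<or> (\<forall>w\<in>verts s. d # w \<in> S)"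

text \<open>
  The states \<open>(v, S)\<close> that a DFS can reach: \<open>S\<close> contains the path to \<open>v\<close>, and each subtree
  branching off that path is either untouched or completely traversed (\<open>settled\<close>).\<close>

fun dfs_inv :: "btree \<Rightarrow> vtx \<Rightarrow> vtx set \<Rightarrow> bool" where
  "dfs_inv Leaf v S = (v = [])"
| "dfs_inv (Node1 s) [] S = settled s 0 S"
| "dfs_inv (Node1 s) (0 # v) S = ([0] \<in> S \<and> dfs_inv s v (child_part 0 S))"
| "dfs_inv (Node2 l r) [] S = (settled l 0 S \<and> settled r 1 S)"
| "dfs_inv (Node2 l r) (0 # v) S = ([0] \<in> S \<and> dfs_inv l v (child_part 0 S) \<and> settled r 1 S)"
| "dfs_inv (Node2 l r) (Suc 0 # v) S = ([1] \<in> S \<and> dfs_inv r v (child_part 1 S) \<and> settled l 0 S)"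
| "dfs_inv _ _ _ = False"

text \<open>Expected time for a DFS in state \<open>(v, S)\<close> to finish and return to the root.\<close>

fun rest_time :: "real \<Rightarrow> btree \<Rightarrow> vtx \<Rightarrow> vtx set \<Rightarrow> real" where
  "rest_time p Leaf v S = 0"
| "rest_time p (Node1 s) [] S = (if [0] \<in> S then 0 else tau_branch p s)"
| "rest_time p (Node1 s) (0 # v) S = rest_time p s v (child_part 0 S) + 1 / p"
| "rest_time p (Node2 l r) [] S =
     (if [0] \<in> S then (if [1] \<in> S then 0 else tau_branch p r)
      else (if [1] \<in> S then tau_branch p l else tau p (Node2 l r)))"
| "rest_time p (Node2 l r) (0 # v) S =
     rest_time p l v (child_part 0 S) + 1 / p + (if [1] \<in> S then 0 else tau_branch p r)"
| "rest_time p (Node2 l r) (Suc 0 # v) S =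
     rest_time p r v (child_part 1 S) + 1 / p + (if [0] \<in> S then 0 else tau_branch p l)"
| "rest_time p _ _ _ = 0"

text \<open>
  The \<open>\<epsilon>\<^sup>*\<close>-mass of the untraversed edges, i.e.\ the probability that the hider has not been
  found yet.\<close>

fun hidden_mass :: "real \<Rightarrow> btree \<Rightarrow> vtx set \<Rightarrow> real" where
  "hidden_mass p Leaf S = 0"
| "hidden_mass p (Node1 s) S =
     (if s = Leaf \<and> [0] \<notin> S then 1 else 0) + hidden_mass p s (child_part 0 S)"
| "hidden_mass p (Node2 l r) S =
     wt_left p l r * ((if l = Leaf \<and> [0] \<notin> S then 1 else 0) + hidden_mass p l (child_part 0 S))
   + wt_right p l r * ((if r = Leaf \<and> [1] \<notin> S then 1 else 0) + hidden_mass p r (child_part 1 S))"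

text \<open>
  The payoff still to come in state \<open>(v, S)\<close>, i.e.\ the expected sum of the hidden mass over all
  future stages. Inside the left branch, the right branch (of weight \<open>wt_right\<close>) is reached
  after finishing the left one and crossing two edges, whence the term
  \<open>rest_time + 2/p + fresh_cost\<close>.\<close>

fun cost :: "real \<Rightarrow> btree \<Rightarrow> vtx \<Rightarrow> vtx set \<Rightarrow> real" where
  "cost p Leaf v S = 0"
| "cost p (Node1 s) [] S = (if [0] \<in> S then 0 else 1 / p + fresh_cost p s)"
| "cost p (Node1 s) (0 # v) S = cost p s v (child_part 0 S)"
| "cost p (Node2 l r) [] S =
     (if [0] \<in> S then (if [1] \<in> S then 0 else wt_right p l r * (1 / p + fresh_cost p r))
      else (if [1] \<in> S then wt_left p l r * (1 / p + fresh_cost p l) else fresh_cost p (Node2 l r)))"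
| "cost p (Node2 l r) (0 # v) S = wt_left p l r * cost p l v (child_part 0 S)
     + (if [1] \<in> S then 0
        else wt_right p l r * (rest_time p l v (child_part 0 S) + 2 / p + fresh_cost p r))"
| "cost p (Node2 l r) (Suc 0 # v) S = wt_right p l r * cost p r v (child_part 1 S)
     + (if [0] \<in> S then 0
        else wt_left p l r * (rest_time p r v (child_part 1 S) + 2 / p + fresh_cost p l))"
| "cost p _ _ _ = 0"

lemma untouched_values:
  assumes p: "0 < p" "p \<le> 1" and "\<forall>w\<in>edges s. w \<notin> S"
  shows "rest_time p s [] S = tau p s \<and> cost p s [] S = fresh_cost p s
    \<and> hidden_mass p s S = (if s = Leaf then 0 else 1)"
  using assms(3)
proof (induction s arbitrary: S)
  case (Node1 s)
  then have "[0] \<notin> S" "\<forall>w\<in>edges s. w \<notin> child_part 0 S"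
    by (auto simp: in_edges_iff)
  then show ?case
    using Node1.IH[of "child_part 0 S"] by (simp add: tau_branch_def)
next
  case (Node2 l r)
  then have "[0] \<notin> S" "[1] \<notin> S"
    "\<forall>w\<in>edges l. w \<notin> child_part 0 S" "\<forall>w\<in>edges r. w \<notin> child_part 1 S"
    by (auto simp: in_edges_iff)
  then show ?case
    using Node2.IH(1)[of "child_part 0 S"] Node2.IH(2)[of "child_part 1 S"] branch_weights(3)[OF p]
    by simp
qed simp

lemma finished_values:
  assumes "\<forall>w\<in>edges s. w \<in> S"
  shows "rest_time p s [] S = 0 \<and> cost p s [] S = 0 \<and> hidden_mass p s S = 0"
  using assms
proof (induction s arbitrary: S)
  case (Node1 s)
  then have "[0] \<in> S" "\<forall>w\<in>edges s. w \<in> child_part 0 S"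
    by (auto simp: in_edges_iff)
  then show ?case
    using Node1.IH[of "child_part 0 S"] by simp
next
  case (Node2 l r)
  then have "[0] \<in> S" "[1] \<in> S" "\<forall>w\<in>edges l. w \<in> child_part 0 S" "\<forall>w\<in>edges r. w \<in> child_part 1 S"
    by (auto simp: in_edges_iff)
  then show ?case
    using Node2.IH(1)[of "child_part 0 S"] Node2.IH(2)[of "child_part 1 S"] by simp
qed simp

lemma settled_traversedD: "settled s d S \<Longrightarrow> [d] \<in> S \<Longrightarrow> \<forall>w\<in>edges s. w \<in> child_part d S"
  unfolding settled_def by (auto simp: in_edges_iff)

lemma settled_untraversedD: "settled s d S \<Longrightarrow> [d] \<notin> S \<Longrightarrow> \<forall>w\<in>edges s. w \<notin> child_part d S"
  unfolding settled_def by (auto simp: in_edges_iff)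

lemma settled_insert_other [simp]: "d \<noteq> d' \<Longrightarrow> settled s d (insert (d' # w) S) = settled s d S"
  unfolding settled_def by auto

lemma untouched_insert_Nil: "\<forall>w\<in>edges s. w \<notin> S \<Longrightarrow> \<forall>w\<in>edges s. w \<notin> insert [] S"
  by (auto simp: in_edges_iff)

lemma hidden_mass_settled_child:
  assumes p: "0 < p" "p \<le> 1" and "settled s d S"
  shows "(if s = Leaf \<and> [d] \<notin> S then 1 else 0) + hidden_mass p s (child_part d S)
    = (if [d] \<in> S then 0 else 1)"
  using finished_values[OF settled_traversedD[OF assms(3)]]
    untouched_values[OF p settled_untraversedD[OF assms(3)]] by (cases "[d] \<in> S") simp_all

lemma hidden_mass_settled:
  "0 < p \<Longrightarrow> p \<le> 1 \<Longrightarrow> settled s d S \<Longrightarrow>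
    hidden_mass p s (child_part d S) = (if [d] \<in> S \<or> s = Leaf then 0 else 1)"
  using finished_values[OF settled_traversedD, of s d S p]
    untouched_values[OF _ _ settled_untraversedD, of p s d S] by auto

lemma hidden_mass_Node2_at_root:
  "0 < p \<Longrightarrow> p \<le> 1 \<Longrightarrow> settled l 0 S \<Longrightarrow> settled r 1 S \<Longrightarrow> hidden_mass p (Node2 l r) S
    = wt_left p l r * (if [0] \<in> S then 0 else 1) + wt_right p l r * (if [1] \<in> S then 0 else 1)"
  using hidden_mass_settled_child[of p l 0 S] hidden_mass_settled_child[of p r 1 S] by simp

lemma hidden_mass_Node2_in_left:
  "0 < p \<Longrightarrow> p \<le> 1 \<Longrightarrow> [0] \<in> S \<Longrightarrow> settled r 1 S \<Longrightarrow> hidden_mass p (Node2 l r) S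
    = wt_left p l r * hidden_mass p l (child_part 0 S) + wt_right p l r * (if [1] \<in> S then 0 else 1)"
  using hidden_mass_settled_child[of p r 1 S] by simp

lemma hidden_mass_Node2_in_right:
  "0 < p \<Longrightarrow> p \<le> 1 \<Longrightarrow> [1] \<in> S \<Longrightarrow> settled l 0 S \<Longrightarrow> hidden_mass p (Node2 l r) S
    = wt_left p l r * (if [0] \<in> S then 0 else 1) + wt_right p l r * hidden_mass p r (child_part 1 S)"
  using hidden_mass_settled_child[of p l 0 S] by simp

lemma dfs_inv_untouched: "\<forall>w\<in>edges s. w \<notin> S \<Longrightarrow> dfs_inv s [] S"
  by (cases s) (auto simp: settled_def in_edges_iff)

lemma dfs_inv_start: "dfs_inv t [] {}"
  using dfs_inv_untouched by auto

lemma dfs_inv_finished_at_root: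
  assumes "dfs_inv s [] S" "\<forall>d. [d] \<in> verts s \<longrightarrow> [d] \<in> S"
  shows "\<forall>w\<in>edges s. w \<in> S"
proof -
  have subtree: "\<forall>w\<in>verts x. d # w \<in> S" if "settled x d S" "[d] \<in> S" for x d
    using that Nil_in_verts[of x] unfolding settled_def by blast
  show ?thesis
  proof (cases s)
    case (Node1 x)
    then have "\<forall>w\<in>verts x. 0 # w \<in> S"
      using assms subtree by auto
    then show ?thesis
      using Node1 by (auto simp: in_edges_iff neq_Nil_conv)
  next
    case (Node2 l r)
    then have "\<forall>w\<in>verts l. 0 # w \<in> S" "\<forall>w\<in>verts r. 1 # w \<in> S"
      using assms subtree by auto
    then show ?thesis
      using Node2 by (auto simp: in_edges_iff neq_Nil_conv)
  qed (simp add: in_edges_iff)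
qed

lemma finished_at_root_values:
  "dfs_inv t [] S \<Longrightarrow> \<forall>d. [d] \<in> verts t \<longrightarrow> [d] \<in> S \<Longrightarrow>
    rest_time p t [] S = 0 \<and> cost p t [] S = 0 \<and> hidden_mass p t S = 0"
  using finished_values dfs_inv_finished_at_root by blast

lemma dfs_inv_position: "dfs_inv t v S \<Longrightarrow> v \<in> verts t \<and> (v \<noteq> [] \<longrightarrow> v \<in> S)"
proof (induction t arbitrary: v S)
  case (Node1 s)
  show ?case
  proof (cases v)
    case (Cons a v')
    then have "a = 0" "[0] \<in> S" "dfs_inv s v' (child_part 0 S)"
      using Node1.prems by (cases a; auto)+
    then show ?thesis
      using Node1.IH[of v' "child_part 0 S"] Cons by (cases v') auto
  qed simp
next
  case (Node2 l r)
  show ?case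
  proof (cases v)
    case (Cons a v')
    show ?thesis
    proof (cases a)
      case 0
      then have "[0] \<in> S" "dfs_inv l v' (child_part 0 S)"
        using Node2.prems Cons by auto
      then show ?thesis
        using Node2.IH(1)[of v' "child_part 0 S"] Cons 0 by (cases v') auto
    next
      case (Suc n)
      then have "n = 0" "[1] \<in> S" "dfs_inv r v' (child_part 1 S)"
        using Node2.prems Cons by (cases n; auto)+
      then show ?thesis
        using Node2.IH(2)[of v' "child_part 1 S"] Cons Suc by (cases v') auto
    qed
  qed simp
qed simp

text \<open>
  A move from \<open>(v, S)\<close> to \<open>(v', S')\<close> that takes expected time \<open>c\<close>: the remaining time drops by
  \<open>c\<close>, and the cost by \<open>c\<close> times the hidden mass, which stays constant while the move is made.\<close>

definition costs_drop :: "real \<Rightarrow> real \<Rightarrow> btree \<Rightarrow> vtx \<Rightarrow> vtx set \<Rightarrow> vtx \<Rightarrow> vtx set \<Rightarrow> bool" where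
  "costs_drop p c t v S v' S' \<longleftrightarrow> rest_time p t v' S' = rest_time p t v S - c
     \<and> cost p t v' S' = cost p t v S - c * hidden_mass p t S"

lemma costs_drop_Node1:
  assumes "costs_drop p c s v (child_part 0 S) v' (child_part 0 S')" "[0] \<in> S" "[0] \<in> S'"
  shows "costs_drop p c (Node1 s) (0 # v) S (0 # v') S'"
  using assms unfolding costs_drop_def by simp

lemma costs_drop_Node2_left:
  assumes p: "0 < p" "p \<le> 1"
    and drop: "costs_drop p c l v (child_part 0 S) v' (child_part 0 S')"
    and "[0] \<in> S" "[0] \<in> S'" "settled r 1 S" "[1] \<in> S' \<longleftrightarrow> [1] \<in> S"
  shows "costs_drop p c (Node2 l r) (0 # v) S (0 # v') S'"
proof -
  from drop have eqs: "rest_time p l v' (child_part 0 S') = rest_time p l v (child_part 0 S) - c"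
    "cost p l v' (child_part 0 S') = cost p l v (child_part 0 S) - c * hidden_mass p l (child_part 0 S)"
    unfolding costs_drop_def by auto
  show ?thesis
    using hidden_mass_Node2_in_left[OF p assms(4,6), of l] assms(4-) unfolding costs_drop_def
    by (cases "[1] \<in> S") (simp_all add: eqs algebra_simps del: hidden_mass.simps)
qed

lemma costs_drop_Node2_right:
  assumes p: "0 < p" "p \<le> 1"
    and drop: "costs_drop p c r v (child_part 1 S) v' (child_part 1 S')"
    and "[1] \<in> S" "[1] \<in> S'" "settled l 0 S" "[0] \<in> S' \<longleftrightarrow> [0] \<in> S"
  shows "costs_drop p c (Node2 l r) (Suc 0 # v) S (Suc 0 # v') S'"
proof -
  from drop have eqs:
    "rest_time p r v' (child_part (Suc 0) S') = rest_time p r v (child_part (Suc 0) S) - c"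
    "cost p r v' (child_part (Suc 0) S') = cost p r v (child_part (Suc 0) S)
      - c * hidden_mass p r (child_part (Suc 0) S)"
    unfolding costs_drop_def by auto
  show ?thesis
    using hidden_mass_Node2_in_right[OF p assms(4,6), of r] assms(4-) unfolding costs_drop_def
    by (cases "[0] \<in> S") (simp_all add: eqs algebra_simps del: hidden_mass.simps)
qed

text \<open>
  Entering either of two untouched branches takes expected time \<open>1/(1 - (1 - p)\<^sup>2)\<close>, and
  leaves the same cost behind: this is where the equal branching weights are needed.\<close>

lemma costs_drop_enter_two_at_root:
  assumes p: "0 < p" "p \<le> 1" and "settled l 0 S" "settled r 1 S" "[0] \<notin> S" "[1] \<notin> S" "d \<le> 1"
  shows "costs_drop p (1 / either_active p) (Node2 l r) [] S [d] (insert [d] S)"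
proof -
  have "\<forall>w\<in>edges l. w \<notin> insert [] (child_part 0 S)" "\<forall>w\<in>edges r. w \<notin> insert [] (child_part 1 S)"
    using untouched_insert_Nil settled_untraversedD assms(3-6) by blast+
  note fresh_l = untouched_values[OF p this(1)] and fresh_r = untouched_values[OF p this(2)]
  have mass: "hidden_mass p (Node2 l r) S = 1"
    using hidden_mass_Node2_at_root[OF p assms(3,4)] assms(5,6) branch_weights(3)[OF p] by simp
  have w: "wt_right p l r = 1 - wt_left p l r"
    "wt_right p l r * tau_branch p l = wt_left p l r * tau_branch p r"
    using branch_weights(3,4)[OF p, of l r] by linarith+
  show ?thesis
  proof (cases d)
    case 0
    have "[1] \<notin> insert [0] S"
      using assms by auto
    then show ?thesis
      using 0 assms fresh_l mass w(2) child_part_insert_Nil[of 0 S] unfolding costs_drop_def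
      by (simp add: either_active_def tau_branch_def w(1) algebra_simps add_divide_distrib
          diff_divide_distrib)
  next
    case (Suc n)
    then have "d = 1" "[0] \<notin> insert [1] S"
      using assms by auto
    moreover have "cost p (Node2 l r) [1] (insert [1] S) = wt_right p l r * fresh_cost p r
        + wt_left p l r * tau_branch p r + wt_left p l r * fresh_cost p l"
      using assms fresh_r child_part_insert_Nil[of 1 S] calculation(2)
      by (simp add: tau_branch_def algebra_simps)
    moreover have "cost p (Node2 l r) [] S = fresh_cost p (Node2 l r)"
      using assms by simp
    moreover have "rest_time p (Node2 l r) [1] (insert [1] S)
        = rest_time p (Node2 l r) [] S - 1 / either_active p"
      using assms fresh_r child_part_insert_Nil[of 1 S] calculation(2)
      by (simp add: either_active_def tau_branch_def algebra_simps)
    ultimately show ?thesis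
      using mass w(2) fresh_cost_Node2_eq[OF p, of l r] unfolding costs_drop_def by simp
  qed
qed

lemma costs_drop_enter_one_at_root:
  assumes p: "0 < p" "p \<le> 1" and inv: "dfs_inv t [] S"
    and fresh: "[d] \<in> verts t" "[d] \<notin> S" and others: "\<forall>d'. d' \<noteq> d \<longrightarrow> [d'] \<in> verts t \<longrightarrow> [d'] \<in> S"
  shows "costs_drop p (1 / p) t [] S [d] (insert [d] S)"
proof (cases t)
  case (Node1 s)
  then have "d = 0" "settled s 0 S"
    using inv fresh by auto
  moreover have "\<forall>w\<in>edges s. w \<notin> insert [] (child_part 0 S)"
    using untouched_insert_Nil settled_untraversedD calculation fresh by blast
  ultimately show ?thesis
    using Node1 fresh untouched_values[OF p] hidden_mass_settled[OF p, of s 0 S]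
      child_part_insert_Nil[of 0 S]
    unfolding costs_drop_def by (simp add: tau_branch_def)
next
  case (Node2 l r)
  then have settled: "settled l 0 S" "settled r 1 S"
    using inv by auto
  note masses = hidden_mass_settled[OF p settled(1)] hidden_mass_settled[OF p settled(2)]
  consider "d = 0" "[1] \<in> S" | "d = 1" "[0] \<in> S"
    using Node2 fresh others by (cases d) auto
  then show ?thesis
  proof cases
    case 1
    then have "\<forall>w\<in>edges l. w \<notin> insert [] (child_part 0 S)"
      using untouched_insert_Nil settled_untraversedD settled fresh by blast
    then show ?thesis
      using 1 Node2 fresh untouched_values[OF p] masses child_part_insert_Nil[of 0 S]
      unfolding costs_drop_def
      by (simp add: tau_branch_def algebra_simps add_divide_distrib diff_divide_distrib)
  next
    case 2
    then have "\<forall>w\<in>edges r. w \<notin> insert [] (child_part 1 S)"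
      using untouched_insert_Nil settled_untraversedD settled fresh by blast
    then show ?thesis
      using 2 Node2 fresh untouched_values[OF p] masses child_part_insert_Nil[of 1 S]
      unfolding costs_drop_def
      by (simp add: tau_branch_def algebra_simps add_divide_distrib diff_divide_distrib)
  qed
qed (use fresh in simp)

lemma costs_drop_return_to_root:
  assumes p: "0 < p" "p \<le> 1" and inv: "dfs_inv t [d] S"
    and finished: "\<forall>d'. [d] @ [d'] \<in> verts t \<longrightarrow> [d] @ [d'] \<in> S"
  shows "costs_drop p (1 / p) t [d] S [] S"
proof (cases t)
  case (Node1 s)
  then have "d = 0" "[0] \<in> S" "dfs_inv s [] (child_part 0 S)"
    using inv by (cases d; simp)+
  moreover have "\<forall>d'. [d'] \<in> verts s \<longrightarrow> [d'] \<in> child_part 0 S"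
    using finished Node1 calculation by auto
  ultimately show ?thesis
    using Node1 finished_at_root_values unfolding costs_drop_def by fastforce
next
  case (Node2 l r)
  have "d = 0 \<or> d = 1"
    using dfs_inv_position[OF inv] Node2 by auto
  then consider "d = 0" "[0] \<in> S" "dfs_inv l [] (child_part 0 S)" "settled r 1 S"
    | "d = 1" "[1] \<in> S" "dfs_inv r [] (child_part 1 S)" "settled l 0 S"
    using inv Node2 by auto
  then show ?thesis
  proof cases
    case 1
    moreover have "\<forall>d'. [d'] \<in> verts l \<longrightarrow> [d'] \<in> child_part 0 S"
      using finished Node2 1 by auto
    ultimately show ?thesis
      using Node2 finished_at_root_values[of l "child_part 0 S" p] hidden_mass_settled[OF p]
      unfolding costs_drop_def
      by (cases "[1] \<in> S") (simp_all add: algebra_simps add_divide_distrib diff_divide_distrib)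
  next
    case 2
    moreover have "\<forall>d'. [d'] \<in> verts r \<longrightarrow> [d'] \<in> child_part 1 S"
      using finished Node2 2 by auto
    ultimately show ?thesis
      using Node2 finished_at_root_values[of r "child_part 1 S" p] hidden_mass_settled[OF p]
      unfolding costs_drop_def
      by (cases "[0] \<in> S") (simp_all add: algebra_simps add_divide_distrib diff_divide_distrib)
  qed
qed (use inv in simp)

lemma step_down_two_untouched:
  assumes p: "0 < p" "p \<le> 1"
  shows "dfs_inv t v S \<Longrightarrow> v @ [0] \<in> verts t \<Longrightarrow> v @ [0] \<notin> S \<Longrightarrow> v @ [1] \<in> verts t
    \<Longrightarrow> v @ [1] \<notin> S \<Longrightarrow> d \<le> 1
    \<Longrightarrow> costs_drop p (1 / either_active p) t v S (v @ [d]) (insert (v @ [d]) S)"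
proof (induction t arbitrary: v S)
  case (Node1 s)
  obtain a v' where "v = a # v'"
    using Node1.prems(4) by (cases v) auto
  then have v: "v = 0 # v'" "[0] \<in> S" "dfs_inv s v' (child_part 0 S)"
    using Node1.prems(1) by (cases a; auto)+
  then show ?case
    using Node1.IH[of v' "child_part 0 S"] Node1.prems by (simp add: costs_drop_Node1)
next
  case (Node2 l r)
  show ?case
  proof (cases v)
    case Nil
    then show ?thesis
      using costs_drop_enter_two_at_root[OF p] Node2.prems by simp
  next
    case (Cons a v')
    have "a = 0 \<or> a = 1"
      using dfs_inv_position[OF Node2.prems(1)] Cons by auto
    then consider "a = 0" "[0] \<in> S" "dfs_inv l v' (child_part 0 S)" "settled r 1 S"
      | "a = 1" "[1] \<in> S" "dfs_inv r v' (child_part 1 S)" "settled l 0 S"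
      using Node2.prems(1) Cons by auto
    then show ?thesis
    proof cases
      case 1
      then show ?thesis
        using Node2.IH(1)[of v' "child_part 0 S"] Node2.prems Cons
        by (auto intro!: costs_drop_Node2_left[OF p])
    next
      case 2
      then show ?thesis
        using Node2.IH(2)[of v' "child_part 1 S"] Node2.prems Cons
        by (auto intro!: costs_drop_Node2_right[OF p])
    qed
  qed
qed simp

lemma step_down_one_untouched:
  assumes p: "0 < p" "p \<le> 1"
  shows "dfs_inv t v S \<Longrightarrow> v @ [d] \<in> verts t \<Longrightarrow> v @ [d] \<notin> S
    \<Longrightarrow> \<forall>d'. d' \<noteq> d \<longrightarrow> v @ [d'] \<in> verts t \<longrightarrow> v @ [d'] \<in> S
    \<Longrightarrow> costs_drop p (1 / p) t v S (v @ [d]) (insert (v @ [d]) S)"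
proof (induction t arbitrary: v S)
  case (Node1 s)
  show ?case
  proof (cases v)
    case Nil
    then show ?thesis
      using costs_drop_enter_one_at_root[OF p] Node1.prems by simp
  next
    case (Cons a v')
    then have "a = 0" "[0] \<in> S" "dfs_inv s v' (child_part 0 S)"
      using Node1.prems(1) by (cases a; auto)+
    then show ?thesis
      using Node1.IH[of v' "child_part 0 S"] Node1.prems Cons by (simp add: costs_drop_Node1)
  qed
next
  case (Node2 l r)
  show ?case
  proof (cases v)
    case Nil
    then show ?thesis
      using costs_drop_enter_one_at_root[OF p] Node2.prems by simp
  next
    case (Cons a v')
    have "a = 0 \<or> a = 1"
      using dfs_inv_position[OF Node2.prems(1)] Cons by auto
    then consider "a = 0" "[0] \<in> S" "dfs_inv l v' (child_part 0 S)" "settled r 1 S"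
      | "a = 1" "[1] \<in> S" "dfs_inv r v' (child_part 1 S)" "settled l 0 S"
      using Node2.prems(1) Cons by auto
    then show ?thesis
    proof cases
      case 1
      then show ?thesis
        using Node2.IH(1)[of v' "child_part 0 S"] Node2.prems Cons
        by (auto intro!: costs_drop_Node2_left[OF p])
    next
      case 2
      then show ?thesis
        using Node2.IH(2)[of v' "child_part 1 S"] Node2.prems Cons
        by (auto intro!: costs_drop_Node2_right[OF p])
    qed
  qed
qed simp

lemma step_up:
  assumes p: "0 < p" "p \<le> 1"
  shows "dfs_inv t v S \<Longrightarrow> v \<noteq> [] \<Longrightarrow> \<forall>d. v @ [d] \<in> verts t \<longrightarrow> v @ [d] \<in> S
    \<Longrightarrow> costs_drop p (1 / p) t v S (butlast v) S"
proof (induction t arbitrary: v S)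
  case (Node1 s)
  then obtain a v' where v: "v = a # v'"
    by (cases v) auto
  show ?case
  proof (cases "v' = []")
    case True
    then show ?thesis
      using costs_drop_return_to_root[OF p] Node1.prems v by simp
  next
    case False
    moreover have "a = 0" "[0] \<in> S" "dfs_inv s v' (child_part 0 S)"
      using Node1.prems(1) v by (cases a; auto)+
    ultimately show ?thesis
      using Node1.IH[of v' "child_part 0 S"] Node1.prems v by (simp add: costs_drop_Node1)
  qed
next
  case (Node2 l r)
  then obtain a v' where v: "v = a # v'"
    by (cases v) auto
  show ?case
  proof (cases "v' = []")
    case True
    then show ?thesis
      using costs_drop_return_to_root[OF p] Node2.prems v by simp
  next
    case False
    have "a = 0 \<or> a = 1"
      using dfs_inv_position[OF Node2.prems(1)] v by auto
    then consider "a = 0" "[0] \<in> S" "dfs_inv l v' (child_part 0 S)" "settled r 1 S"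
      | "a = 1" "[1] \<in> S" "dfs_inv r v' (child_part 1 S)" "settled l 0 S"
      using Node2.prems(1) v by auto
    then show ?thesis
    proof cases
      case 1
      then show ?thesis
        using Node2.IH(1)[of v' "child_part 0 S"] Node2.prems v False
        by (auto intro!: costs_drop_Node2_left[OF p])
    next
      case 2
      then show ?thesis
        using Node2.IH(2)[of v' "child_part 1 S"] Node2.prems v False
        by (auto intro!: costs_drop_Node2_right[OF p])
    qed
  qed
qed simp

lemma dfs_inv_step_down:
  "dfs_inv t v S \<Longrightarrow> v @ [d] \<in> verts t \<Longrightarrow> v @ [d] \<notin> S \<Longrightarrow> dfs_inv t (v @ [d]) (insert (v @ [d]) S)"
proof (induction t arbitrary: v S)
  case (Node1 s)
  show ?case
  proof (cases v)
    case Nil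
    then have "d = 0" "\<forall>w\<in>edges s. w \<notin> insert [] (child_part 0 S)"
      using Node1.prems untouched_insert_Nil settled_untraversedD by auto
    then show ?thesis
      using Nil dfs_inv_untouched by simp
  next
    case (Cons a v')
    then have "a = 0" "[0] \<in> S" "dfs_inv s v' (child_part 0 S)"
      using Node1.prems by (cases a; auto)+
    then show ?thesis
      using Node1.IH[of v' "child_part 0 S"] Node1.prems Cons by simp
  qed
next
  case (Node2 l r)
  show ?case
  proof (cases v)
    case Nil
    then have "settled l 0 S" "settled r 1 S" "d = 0 \<or> d = 1"
      using Node2.prems by auto
    then show ?thesis
      using Nil Node2.prems dfs_inv_untouched[OF untouched_insert_Nil[OF settled_untraversedD]]
      by auto
  next
    case (Cons a v')
    have "a = 0 \<or> a = 1"
      using dfs_inv_position[OF Node2.prems(1)] Cons by auto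
    then show ?thesis
      using Node2.IH(1)[of v' "child_part 0 S"] Node2.IH(2)[of v' "child_part 1 S"] Node2.prems Cons
      by auto
  qed
qed simp

lemma dfs_inv_return_to_root:
  assumes inv: "dfs_inv t [d] S" and finished: "\<forall>d'. [d] @ [d'] \<in> verts t \<longrightarrow> [d] @ [d'] \<in> S"
  shows "dfs_inv t [] S"
proof -
  have settled: "settled s d S" if "[d] \<in> S" "dfs_inv s [] (child_part d S)"
    "\<forall>d'. [d'] \<in> verts s \<longrightarrow> [d'] \<in> child_part d S" for s
  proof -
    have "\<forall>w\<in>edges s. w \<in> child_part d S"
      using dfs_inv_finished_at_root that(2,3) .
    then show ?thesis
      unfolding settled_def using that(1) by (auto simp: in_edges_iff)
  qed
  have "d = 0 \<or> d = 1"
    using dfs_inv_position[OF inv] by (cases t) auto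
  then show ?thesis
    using inv finished settled by (cases t) auto
qed

lemma dfs_inv_step_up:
  "dfs_inv t v S \<Longrightarrow> v \<noteq> [] \<Longrightarrow> \<forall>d. v @ [d] \<in> verts t \<longrightarrow> v @ [d] \<in> S \<Longrightarrow> dfs_inv t (butlast v) S"
proof (induction t arbitrary: v S)
  case (Node1 s)
  then obtain a v' where v: "v = a # v'"
    by (cases v) auto
  show ?case
  proof (cases "v' = []")
    case True
    have "dfs_inv (Node1 s) [] S"
      by (rule dfs_inv_return_to_root) (use Node1.prems v True in auto)
    then show ?thesis
      using v True by simp
  next
    case False
    then show ?thesis
      using Node1.IH[of v' "child_part 0 S"] Node1.prems v by (cases a) auto
  qed
next
  case (Node2 l r)
  then obtain a v' where v: "v = a # v'"
    by (cases v) auto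
  show ?case
  proof (cases "v' = []")
    case True
    have "dfs_inv (Node2 l r) [] S"
      by (rule dfs_inv_return_to_root) (use Node2.prems v True in auto)
    then show ?thesis
      using v True by simp
  next
    case False
    have "a = 0 \<or> a = 1"
      using dfs_inv_position[OF Node2.prems(1)] v by auto
    then show ?thesis
      using Node2.IH(1)[of v' "child_part 0 S"] Node2.IH(2)[of v' "child_part 1 S"] Node2.prems v False
      by auto
  qed
qed simp

lemma hidden_mass_bounds: "0 < p \<Longrightarrow> p \<le> 1 \<Longrightarrow> 0 \<le> hidden_mass p t S \<and> hidden_mass p t S \<le> 1"
proof (induction t arbitrary: S)
  case (Node1 s)
  then show ?case
    using Node1.IH[of "child_part 0 S"] by (cases "s = Leaf") auto
next
  case (Node2 l r)
  define a where "a = (if l = Leaf \<and> [0] \<notin> S then 1 else 0) + hidden_mass p l (child_part 0 S)"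
  define b where "b = (if r = Leaf \<and> [1] \<notin> S then 1 else 0) + hidden_mass p r (child_part 1 S)"
  have "0 \<le> a" "a \<le> 1" "0 \<le> b" "b \<le> 1"
    using Node2.IH(1)[OF Node2.prems, of "child_part 0 S"] Node2.IH(2)[OF Node2.prems, of "child_part 1 S"]
    unfolding a_def b_def by auto
  moreover have "0 < wt_left p l r" "0 < wt_right p l r" "wt_left p l r + wt_right p l r = 1"
    using branch_weights[OF Node2.prems] by auto
  moreover have "hidden_mass p (Node2 l r) S = wt_left p l r * a + wt_right p l r * b"
    by (simp add: a_def b_def)
  ultimately show ?case
    using convex_bound_le[of a 1 b "wt_left p l r" "wt_right p l r"] by (auto simp: add_nonneg_nonneg)
qed simp

fun cost_bound :: "real \<Rightarrow> btree \<Rightarrow> real" where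
  "cost_bound p Leaf = 0"
| "cost_bound p (Node1 s) = cost_bound p s + 1 / p + fresh_cost p s"
| "cost_bound p (Node2 l r) = cost_bound p l + cost_bound p r + tau_branch p l + tau_branch p r
     + fresh_cost p l + fresh_cost p r + 2 / p + fresh_cost p (Node2 l r)"

lemma cost_bound_nonneg: "0 < p \<Longrightarrow> p \<le> 1 \<Longrightarrow> 0 \<le> cost_bound p t"
proof (induction t)
  case (Node1 s)
  then show ?case
    using fresh_cost_nonneg[OF Node1.prems, of s] by simp
next
  case (Node2 l r)
  have "0 \<le> fresh_cost p (Node2 l r)" "0 \<le> fresh_cost p l" "0 \<le> fresh_cost p r"
    by (rule fresh_cost_nonneg[OF Node2.prems])+
  moreover have "0 < tau_branch p l" "0 < tau_branch p r"
    using tau_branch_pos[OF Node2.prems] by auto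
  ultimately show ?case
    using Node2 by (simp del: fresh_cost.simps)
qed simp

lemma rest_time_bounds:
  assumes p: "0 < p" "p \<le> 1"
  shows "dfs_inv t v S \<Longrightarrow> 0 \<le> rest_time p t v S \<and> rest_time p t v S \<le> tau p t"
proof (induction t arbitrary: v S)
  case (Node1 s)
  show ?case
  proof (cases v)
    case Nil
    then show ?thesis
      using tau_branch_pos[OF p, of s] by (simp add: tau_branch_def)
  next
    case (Cons a v')
    then have "a = 0" "dfs_inv s v' (child_part 0 S)"
      using Node1.prems by (cases a; auto)+
    moreover have "0 \<le> 1 / p" "1 / p \<le> 2 / p"
      using p by (simp_all add: divide_right_mono)
    ultimately show ?thesis
      using Node1.IH[of v' "child_part 0 S"] Cons by auto
  qed
next
  case (Node2 l r)
  have "0 \<le> tau p l" "0 \<le> tau p r" "0 < 1 / either_active p" "0 < 1 / p" "1 / p \<le> 2 / p"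
      "2 / p \<le> 3 / p"
    using tau_nonneg[OF p] either_active_pos[OF p] p by (auto simp: divide_right_mono)
  then have bounds: "0 \<le> tau_branch p l" "tau_branch p l \<le> tau p (Node2 l r)"
      "0 \<le> tau_branch p r" "tau_branch p r \<le> tau p (Node2 l r)"
      "0 \<le> tau p (Node2 l r)"
      "x \<le> tau p l \<Longrightarrow> x + 1 / p + tau_branch p r \<le> tau p (Node2 l r)"
      "y \<le> tau p r \<Longrightarrow> y + 1 / p + tau_branch p l \<le> tau p (Node2 l r)"
      "x \<le> tau p l \<Longrightarrow> x + 1 / p \<le> tau p (Node2 l r)"
      "y \<le> tau p r \<Longrightarrow> y + 1 / p \<le> tau p (Node2 l r)" for x y
    unfolding tau_Node2 tau_branch_def by linarith+
  show ?case
  proof (cases v)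
    case Nil
    then show ?thesis
      using bounds by (simp del: tau.simps)
  next
    case (Cons a v')
    have "a = 0 \<or> a = 1"
      using dfs_inv_position[OF Node2.prems] Cons by auto
    then show ?thesis
      using Node2.IH(1)[of v' "child_part 0 S"] Node2.IH(2)[of v' "child_part 1 S"] Node2.prems Cons
        bounds p by (auto simp del: tau.simps)
  qed
qed simp

lemma weighted_cost_le:
  fixes w w' c R x K K' :: real
  assumes "0 \<le> w" "0 \<le> w'" "0 \<le> c" "c \<le> K' * R" "K' \<le> K" "0 \<le> R" "0 \<le> x" "x \<le> K"
  shows "0 \<le> w * c + (if b then 0 else w' * x)
    \<and> w * c + (if b then 0 else w' * x) \<le> K * (w * R + w' * (if b then 0 else 1))"
proof -
  have "c \<le> K * R"
    using assms(4-6) by (meson mult_right_mono order_trans)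
  then have "w * c \<le> w * (K * R)" "w' * x \<le> w' * K"
    using assms by (simp_all add: mult_left_mono)
  then show ?thesis
    using assms by (cases b) (simp_all add: algebra_simps)
qed

lemma cost_bound_Node2_ge:
  fixes l r :: btree
  assumes p: "0 < p" "p \<le> 1"
  defines "K \<equiv> cost_bound p (Node2 l r)"
  shows "1 / p + fresh_cost p l \<le> K" "1 / p + fresh_cost p r \<le> K" "fresh_cost p (Node2 l r) \<le> K"
    "cost_bound p l \<le> K" "cost_bound p r \<le> K"
    "x \<le> tau p l \<Longrightarrow> x + 2 / p + fresh_cost p r \<le> K"
    "y \<le> tau p r \<Longrightarrow> y + 2 / p + fresh_cost p l \<le> K"
proof -
  have "0 \<le> fresh_cost p l" "0 \<le> fresh_cost p r" "0 \<le> fresh_cost p (Node2 l r)"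
    "0 \<le> cost_bound p l" "0 \<le> cost_bound p r" "0 < tau_branch p l" "0 < tau_branch p r"
    "0 < 1 / p" "1 / p \<le> 2 / p"
    using fresh_cost_nonneg[OF p] cost_bound_nonneg[OF p] tau_branch_pos[OF p] p
    by (auto simp: divide_right_mono simp del: fresh_cost.simps)
  then show "1 / p + fresh_cost p l \<le> K" "1 / p + fresh_cost p r \<le> K" "fresh_cost p (Node2 l r) \<le> K"
    "cost_bound p l \<le> K" "cost_bound p r \<le> K"
    "x \<le> tau p l \<Longrightarrow> x + 2 / p + fresh_cost p r \<le> K"
    "y \<le> tau p r \<Longrightarrow> y + 2 / p + fresh_cost p l \<le> K"
    using tau_branch_def[of p l] tau_branch_def[of p r] unfolding K_def cost_bound.simps by linarith+
qed

lemma cost_bounds_Node2_at_root: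
  assumes p: "0 < p" "p \<le> 1" and "settled l 0 S" "settled r 1 S"
  shows "0 \<le> cost p (Node2 l r) [] S
    \<and> cost p (Node2 l r) [] S \<le> cost_bound p (Node2 l r) * hidden_mass p (Node2 l r) S"
proof -
  define K where "K = cost_bound p (Node2 l r)"
  note K = cost_bound_Node2_ge[OF p, where l = l and r = r, folded K_def]
  have w: "0 < wt_left p l r" "0 < wt_right p l r" "wt_left p l r + wt_right p l r = 1"
    using branch_weights[OF p] by auto
  have "hidden_mass p (Node2 l r) S
      = wt_left p l r * (if [0] \<in> S then 0 else 1) + wt_right p l r * (if [1] \<in> S then 0 else 1)"
    by (rule hidden_mass_Node2_at_root[OF p assms(3,4)])
  moreover have "wt_left p l r * (1 / p + fresh_cost p l) \<le> K * wt_left p l r"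
    "wt_right p l r * (1 / p + fresh_cost p r) \<le> K * wt_right p l r"
    using K(1,2) w by (simp_all add: mult_left_mono mult.commute[of K])
  moreover have "0 \<le> wt_left p l r * (1 / p + fresh_cost p l)"
    "0 \<le> wt_right p l r * (1 / p + fresh_cost p r)" "0 \<le> fresh_cost p (Node2 l r)"
    using w fresh_cost_nonneg[OF p] p by (simp_all del: fresh_cost.simps)
  ultimately show ?thesis
    using K(3) w(3) unfolding K_def[symmetric] by (auto simp del: fresh_cost.simps hidden_mass.simps)
qed

lemma cost_bounds:
  assumes p: "0 < p" "p \<le> 1"
  shows "dfs_inv t v S \<Longrightarrow> 0 \<le> cost p t v S \<and> cost p t v S \<le> cost_bound p t * hidden_mass p t S"
proof (induction t arbitrary: v S)
  case (Node1 s)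
  have nonneg: "0 \<le> fresh_cost p s" "0 \<le> cost_bound p s" "0 < 1 / p"
    using fresh_cost_nonneg[OF p] cost_bound_nonneg[OF p] p by auto
  show ?case
  proof (cases v)
    case Nil
    then show ?thesis
      using Node1.prems hidden_mass_settled[OF p, of s 0 S] nonneg by auto
  next
    case (Cons a v')
    then have "a = 0" "[0] \<in> S" "dfs_inv s v' (child_part 0 S)"
      using Node1.prems by (cases a; auto)+
    moreover have "cost_bound p s * hidden_mass p s (child_part 0 S)
        \<le> cost_bound p (Node1 s) * hidden_mass p s (child_part 0 S)"
      using hidden_mass_bounds[OF p] nonneg by (intro mult_right_mono) auto
    ultimately show ?thesis
      using Node1.IH[of v' "child_part 0 S"] Cons by auto
  qed
next
  case (Node2 l r)
  define K where "K = cost_bound p (Node2 l r)"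
  note K = cost_bound_Node2_ge[OF p, where l = l and r = r, folded K_def]
  have w: "0 \<le> wt_left p l r" "0 \<le> wt_right p l r"
    using branch_weights(1,2)[OF p, of l r] by auto
  show ?case
  proof (cases v)
    case Nil
    then show ?thesis
      using cost_bounds_Node2_at_root[OF p] Node2.prems by simp
  next
    case (Cons a v')
    have "a = 0 \<or> a = 1"
      using dfs_inv_position[OF Node2.prems] Cons by auto
    then consider "a = 0" "[0] \<in> S" "dfs_inv l v' (child_part 0 S)" "settled r 1 S"
      | "a = 1" "[1] \<in> S" "dfs_inv r v' (child_part 1 S)" "settled l 0 S"
      using Node2.prems Cons by auto
    then show ?thesis
    proof cases
      case 1
      let ?c = "cost p l v' (child_part 0 S)" and ?R = "hidden_mass p l (child_part 0 S)"
        and ?x = "rest_time p l v' (child_part 0 S) + 2 / p + fresh_cost p r"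
      have "0 \<le> ?c" "?c \<le> cost_bound p l * ?R" "0 \<le> ?R" "0 \<le> ?x" "?x \<le> K"
        using Node2.IH(1)[OF 1(3)] hidden_mass_bounds[OF p] rest_time_bounds[OF p 1(3)] K(6)
          fresh_cost_nonneg[OF p, of r] p by auto
      then show ?thesis
        using weighted_cost_le[OF w(1,2) _ _ K(4), of ?c ?R ?x "[1] \<in> S"]
          hidden_mass_Node2_in_left[OF p 1(2,4)] Cons 1 unfolding K_def[symmetric]
        by (simp del: fresh_cost.simps hidden_mass.simps)
    next
      case 2
      let ?c = "cost p r v' (child_part (Suc 0) S)" and ?R = "hidden_mass p r (child_part (Suc 0) S)"
        and ?x = "rest_time p r v' (child_part (Suc 0) S) + 2 / p + fresh_cost p l"
      have "0 \<le> ?c" "?c \<le> cost_bound p r * ?R" "0 \<le> ?R" "0 \<le> ?x" "?x \<le> K"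
        using Node2.IH(2)[OF 2(3)] hidden_mass_bounds[OF p] rest_time_bounds[OF p 2(3)] K(7)
          fresh_cost_nonneg[OF p, of l] p by auto
      moreover have "hidden_mass p (Node2 l r) S
          = wt_right p l r * ?R + wt_left p l r * (if [0] \<in> S then 0 else 1)"
        using hidden_mass_Node2_in_right[OF p 2(2,4)] by simp
      ultimately show ?thesis
        using weighted_cost_le[OF w(2,1) _ _ K(5), of ?c ?R ?x "[0] \<in> S"] Cons 2
        unfolding K_def[symmetric] by (cases "[0] \<in> S") (simp_all del: fresh_cost.simps hidden_mass.simps)
    qed
  qed
qed simp


section \<open>One stage of the search\<close>

definition crossed :: "vtx \<Rightarrow> vtx \<Rightarrow> vtx set" where
  "crossed v x = {e. e \<noteq> [] \<and> {v, x} = {e, butlast e}}"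

lemma positions_snoc: "positions (h @ [(A, x)]) = positions h @ [x]"
  by (simp add: positions_def)

lemma pos_snoc [simp]: "pos (h @ [(A, x)]) = x"
  by (simp add: pos_def positions_snoc)

lemma pos_Nil [simp]: "pos [] = []"
  by (simp add: pos_def positions_def)

lemma traversed_Nil [simp]: "traversed [] = {}"
  by (simp add: traversed_def)

lemma traversed_snoc: "traversed (h @ [(A, x)]) = traversed h \<union> crossed (pos h) x"
proof -
  let ?P = "positions h" and ?Q = "positions h @ [x]"
  have len: "length ?P = Suc (length h)"
    by (simp add: positions_def)
  have old: "?Q ! i = ?P ! i" "?Q ! Suc i = ?P ! Suc i" if "i < length h" for i
    using that len by (simp_all add: nth_append)
  have "?Q ! length h = ?P ! length h"
    using len by (simp add: nth_append)
  also have "\<dots> = pos h"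
    using len last_conv_nth[of ?P] by (auto simp: pos_def positions_def)
  finally have new: "?Q ! length h = pos h" "?Q ! Suc (length h) = x"
    using len by (simp_all add: nth_append)
  have "(\<exists>i<length h. {?Q ! i, ?Q ! Suc i} = E) \<longleftrightarrow> (\<exists>i<length h. {?P ! i, ?P ! Suc i} = E)" for E
    using old by auto
  then show ?thesis
    unfolding traversed_def crossed_def positions_snoc length_append_singleton Ex_less_Suc new
    by auto
qed

lemma butlast_neq_self: "w \<noteq> [] \<Longrightarrow> butlast w \<noteq> w"
  by (metis length_butlast diff_less length_greater_0_conv less_irrefl zero_less_one)

lemma crossed_down: "crossed v (v @ [d]) = {v @ [d]}"
proof -
  have "\<not> (v = e \<and> v @ [d] = butlast e)" for e
    by (metis length_append_singleton length_butlast lessI less_imp_diff_less nat_neq_iff)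
  then show ?thesis
    unfolding crossed_def by (auto simp: doubleton_eq_iff)
qed

lemma crossed_up:
  assumes "v \<noteq> []"
  shows "crossed v (butlast v) = {v}"
proof -
  have "\<not> (v = butlast e \<and> butlast v = e)" for e
  proof
    assume *: "v = butlast e \<and> butlast v = e"
    have "length v = length e - 1" "length e = length v - 1"
      using * length_butlast by metis+
    moreover have "0 < length v"
      using assms by simp
    ultimately show False
      by arith
  qed
  moreover have "butlast v \<noteq> v"
    using assms butlast_neq_self by blast
  ultimately show ?thesis
    unfolding crossed_def using assms by (auto simp: doubleton_eq_iff)
qed

lemma crossed_stay: "crossed v v = {}"
  unfolding crossed_def using butlast_neq_self by (auto simp: doubleton_eq_iff)

lemma dfs_moveE:
  assumes "x \<in> dfs_moves t v S A"
  obtains (down) d where "v @ [d] \<in> verts t" "v @ [d] \<notin> S" "v @ [d] \<in> A" "x = v @ [d]"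
  | (wait) "x = v" "\<forall>d. v @ [d] \<in> verts t \<longrightarrow> v @ [d] \<notin> S \<longrightarrow> v @ [d] \<notin> A"
      "(\<exists>d. v @ [d] \<in> verts t \<and> v @ [d] \<notin> S) \<or> v = [] \<or> v \<notin> A"
  | (up) "x = butlast v" "\<forall>d. v @ [d] \<in> verts t \<longrightarrow> v @ [d] \<in> S" "v \<noteq> []" "v \<in> A"
  using assms unfolding dfs_moves_def Let_def children_def
  by (auto split: if_splits)

lemma prob_all_inactive:
  assumes K: "Ks \<subseteq> edges t" and p: "0 \<le> p" "p \<le> 1"
  shows "measure_pmf.prob (act_pmf t p) {A. A \<inter> Ks = {}} = (1 - p) ^ card Ks"
proof -
  define B where "B = (\<lambda>e::vtx. if e \<in> Ks then {False} else (UNIV :: bool set))"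
  have pre: "(\<lambda>f. {e. f e}) -` {A. A \<inter> Ks = {}} = Pi (edges t) B"
    using K unfolding B_def by (auto simp: Pi_def)
  have "measure_pmf.prob (act_pmf t p) {A. A \<inter> Ks = {}} =
      measure_pmf.prob (Pi_pmf (edges t) False (\<lambda>_. bernoulli_pmf p)) (Pi (edges t) B)"
    unfolding act_pmf_def measure_map_pmf pre by (rule refl)
  also have "\<dots> = (\<Prod>e\<in>edges t. measure_pmf.prob (bernoulli_pmf p) (B e))"
    by (rule measure_Pi_pmf_Pi) simp
  also have "\<dots> = (\<Prod>e\<in>edges t. if e \<in> Ks then 1 - p else 1)"
    using p by (intro prod.cong) (auto simp: B_def measure_pmf_single)
  also have "\<dots> = (\<Prod>e\<in>edges t \<inter> Ks. 1 - p)"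
    by (rule prod.inter_restrict[symmetric]) simp
  also have "edges t \<inter> Ks = Ks"
    using K by auto
  finally show ?thesis
    by simp
qed

lemma nn_integral_pmf_if:
  fixes a b :: real
  assumes "0 \<le> a" "0 \<le> b"
  shows "(\<integral>\<^sup>+A. ennreal (if A \<in> E then a + b else a) \<partial>measure_pmf M)
    = ennreal (a + b * measure_pmf.prob M E)"
proof -
  have "(\<integral>\<^sup>+A. ennreal (if A \<in> E then a + b else a) \<partial>measure_pmf M) =
      (\<integral>\<^sup>+A. ennreal a + ennreal b * indicator E A \<partial>measure_pmf M)"
    using assms by (intro nn_integral_cong) (auto simp: ennreal_plus)
  also have "\<dots> = ennreal a + ennreal b * ennreal (measure_pmf.prob M E)"
    by (simp add: nn_integral_add nn_integral_cmult_indicator measure_pmf.emeasure_eq_measure)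
  also have "\<dots> = ennreal (a + b * measure_pmf.prob M E)"
    using assms by (simp add: ennreal_mult ennreal_plus)
  finally show ?thesis .
qed

text \<open>
  From the state \<open>(v, S)\<close>, the cost after one stage depends on the active set only through
  whether all edges of \<open>Ks\<close> are inactive (then the searcher waits), and its expectation
  \<open>a + b (1 - p)\<^bsup>|Ks|\<^esup>\<close> falls short of the current cost by exactly the hidden mass.\<close>

definition stage_law :: "real \<Rightarrow> btree \<Rightarrow> vtx \<Rightarrow> vtx set \<Rightarrow> vtx set \<Rightarrow> real \<Rightarrow> real \<Rightarrow> bool" where
  "stage_law p t v S Ks a b \<longleftrightarrow> Ks \<subseteq> edges t \<and> 0 \<le> a \<and> 0 \<le> b
     \<and> a + b * (1 - p) ^ card Ks + hidden_mass p t S = cost p t v S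
     \<and> (\<forall>A x. x \<in> dfs_moves t v S A \<longrightarrow> dfs_inv t x (S \<union> crossed v x)
           \<and> cost p t x (S \<union> crossed v x) = (if A \<inter> Ks = {} then a + b else a))"

lemma stage_law_two_untouched:
  assumes p: "0 < p" "p \<le> 1" and inv: "dfs_inv t v S"
    and fresh: "v @ [0] \<in> verts t" "v @ [0] \<notin> S" "v @ [1] \<in> verts t" "v @ [1] \<notin> S"
  shows "stage_law p t v S {v @ [0], v @ [1]}
    (cost p t v S - hidden_mass p t S / either_active p) (hidden_mass p t S / either_active p)"
proof -
  define a where "a = cost p t v S - hidden_mass p t S / either_active p"
  define b where "b = hidden_mass p t S / either_active p"
  have q: "0 < either_active p"
    using either_active_pos[OF p] .
  have enter: "dfs_inv t (v @ [d]) (insert (v @ [d]) S) \<and> cost p t (v @ [d]) (insert (v @ [d]) S) = a"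
    if "d \<le> 1" for d
    using step_down_two_untouched[OF p inv fresh that] dfs_inv_step_down[OF inv, of d] fresh that
    unfolding a_def costs_drop_def by (cases d) auto
  have "0 \<le> a"
    using enter[of 0] cost_bounds[OF p] by fastforce
  moreover have "0 \<le> b"
    using hidden_mass_bounds[OF p] q unfolding b_def by simp
  moreover have "a + b * (1 - p) ^ card {v @ [0], v @ [1]} + hidden_mass p t S = cost p t v S"
  proof -
    have pow: "(1 - p) ^ card {v @ [0], v @ [1]} = 1 - either_active p"
      unfolding either_active_def by (simp add: power2_eq_square)
    have "hidden_mass p t S / either_active p * (1 - either_active p)
        = hidden_mass p t S / either_active p - hidden_mass p t S"
      using q by (simp add: field_simps)
    then show ?thesis
      unfolding a_def b_def pow by linarith
  qed
  moreover have "{v @ [0], v @ [1]} \<subseteq> edges t"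
    using fresh by (auto simp: in_edges_iff)
  moreover have "dfs_inv t x (S \<union> crossed v x) \<and>
      cost p t x (S \<union> crossed v x) = (if A \<inter> {v @ [0], v @ [1]} = {} then a + b else a)"
    if "x \<in> dfs_moves t v S A" for A x
    using that
  proof (cases rule: dfs_moveE)
    case (down d)
    then have "d \<le> 1"
      using snoc_in_vertsD by blast
    then have "A \<inter> {v @ [0], v @ [1]} \<noteq> {}"
      using down by (cases d) auto
    then show ?thesis
      using down(4) enter[OF \<open>d \<le> 1\<close>] crossed_down[of v d] by auto
  next
    case wait
    then have "A \<inter> {v @ [0], v @ [1]} = {}"
      using fresh by auto
    then show ?thesis
      using inv unfolding a_def b_def wait(1) crossed_stay by simp
  qed (use fresh in auto)
  ultimately show ?thesis
    unfolding stage_law_def a_def b_def by blast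
qed

lemma stage_law_one_untouched:
  assumes p: "0 < p" "p \<le> 1" and inv: "dfs_inv t v S"
    and fresh: "v @ [d0] \<in> verts t" "v @ [d0] \<notin> S"
    and others: "\<forall>d. d \<noteq> d0 \<longrightarrow> v @ [d] \<in> verts t \<longrightarrow> v @ [d] \<in> S"
  shows "stage_law p t v S {v @ [d0]} (cost p t v S - hidden_mass p t S / p) (hidden_mass p t S / p)"
proof -
  define a where "a = cost p t v S - hidden_mass p t S / p"
  define b where "b = hidden_mass p t S / p"
  have enter: "dfs_inv t (v @ [d0]) (insert (v @ [d0]) S) \<and> cost p t (v @ [d0]) (insert (v @ [d0]) S) = a"
    using step_down_one_untouched[OF p inv fresh others] dfs_inv_step_down[OF inv fresh]
    unfolding a_def costs_drop_def by auto
  have "0 \<le> a"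
    using enter cost_bounds[OF p] by fastforce
  moreover have "0 \<le> b"
    using hidden_mass_bounds[OF p] p unfolding b_def by simp
  moreover have "a + b * (1 - p) ^ card {v @ [d0]} + hidden_mass p t S = cost p t v S"
  proof -
    have "hidden_mass p t S / p * (1 - p) = hidden_mass p t S / p - hidden_mass p t S"
      using p by (simp add: field_simps)
    then show ?thesis
      unfolding a_def b_def by simp
  qed
  moreover have "{v @ [d0]} \<subseteq> edges t"
    using fresh by (simp add: in_edges_iff)
  moreover have "dfs_inv t x (S \<union> crossed v x) \<and>
      cost p t x (S \<union> crossed v x) = (if A \<inter> {v @ [d0]} = {} then a + b else a)"
    if "x \<in> dfs_moves t v S A" for A x
    using that
  proof (cases rule: dfs_moveE)
    case (down d)
    then have "d = d0"
      using others by auto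
    then show ?thesis
      using enter down crossed_down[of v d] by auto
  next
    case wait
    then have "A \<inter> {v @ [d0]} = {}"
      using fresh by auto
    then show ?thesis
      using inv unfolding a_def b_def wait(1) crossed_stay by simp
  qed (use fresh in auto)
  ultimately show ?thesis
    unfolding stage_law_def a_def b_def by blast
qed

lemma stage_law_finished:
  assumes p: "0 < p" "p \<le> 1" and inv: "dfs_inv t [] S"
    and finished: "\<forall>d. [d] \<in> verts t \<longrightarrow> [d] \<in> S"
  shows "stage_law p t [] S {} (cost p t [] S) 0"
proof -
  have "hidden_mass p t S = 0"
    using finished_at_root_values[OF inv finished] by auto
  moreover have "0 \<le> cost p t [] S"
    using cost_bounds[OF p inv] by auto
  moreover have "dfs_inv t x (S \<union> crossed [] x) \<and> cost p t x (S \<union> crossed [] x) = cost p t [] S"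
    if "x \<in> dfs_moves t [] S A" for A x
    using that
  proof (cases rule: dfs_moveE)
    case (down d)
    then show ?thesis
      using finished by auto
  next
    case wait
    then show ?thesis
      using inv by (simp add: crossed_stay)
  qed simp
  ultimately show ?thesis
    unfolding stage_law_def by simp
qed

lemma stage_law_backtrack:
  assumes p: "0 < p" "p \<le> 1" and inv: "dfs_inv t v S" and "v \<noteq> []"
    and finished: "\<forall>d. v @ [d] \<in> verts t \<longrightarrow> v @ [d] \<in> S"
  shows "stage_law p t v S {v} (cost p t v S - hidden_mass p t S / p) (hidden_mass p t S / p)"
proof -
  define a where "a = cost p t v S - hidden_mass p t S / p"
  define b where "b = hidden_mass p t S / p"
  have leave: "dfs_inv t (butlast v) S \<and> cost p t (butlast v) S = a"
    using step_up[OF p inv \<open>v \<noteq> []\<close> finished] dfs_inv_step_up[OF inv \<open>v \<noteq> []\<close> finished]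
    unfolding a_def costs_drop_def by auto
  have v: "v \<in> verts t" "v \<in> S"
    using dfs_inv_position[OF inv] \<open>v \<noteq> []\<close> by auto
  have "0 \<le> a"
    using leave cost_bounds[OF p] by fastforce
  moreover have "0 \<le> b"
    using hidden_mass_bounds[OF p] p unfolding b_def by simp
  moreover have "a + b * (1 - p) ^ card {v} + hidden_mass p t S = cost p t v S"
  proof -
    have "hidden_mass p t S / p * (1 - p) = hidden_mass p t S / p - hidden_mass p t S"
      using p by (simp add: field_simps)
    then show ?thesis
      unfolding a_def b_def by simp
  qed
  moreover have "{v} \<subseteq> edges t"
    using v \<open>v \<noteq> []\<close> by (simp add: in_edges_iff)
  moreover have "dfs_inv t x (S \<union> crossed v x) \<and>
      cost p t x (S \<union> crossed v x) = (if A \<inter> {v} = {} then a + b else a)"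
    if "x \<in> dfs_moves t v S A" for A x
    using that
  proof (cases rule: dfs_moveE)
    case (down d)
    then show ?thesis
      using finished by auto
  next
    case wait
    then have "v \<notin> A"
      using finished \<open>v \<noteq> []\<close> by auto
    then show ?thesis
      using inv unfolding a_def b_def wait(1) crossed_stay by simp
  next
    case up
    moreover have "S \<union> {v} = S"
      using v by auto
    ultimately show ?thesis
      using leave crossed_up[OF \<open>v \<noteq> []\<close>] by auto
  qed
  ultimately show ?thesis
    unfolding stage_law_def a_def b_def by blast
qed

lemma stage_law_exists:
  assumes p: "0 < p" "p \<le> 1" and inv: "dfs_inv t v S"
  obtains Ks a b where "stage_law p t v S Ks a b"
proof (cases "v @ [0] \<in> verts t \<and> v @ [0] \<notin> S \<and> v @ [1] \<in> verts t \<and> v @ [1] \<notin> S")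
  case True
  then show ?thesis
    using stage_law_two_untouched[OF p inv] that by blast
next
  case not_two: False
  show ?thesis
  proof (cases "\<exists>d. v @ [d] \<in> verts t \<and> v @ [d] \<notin> S")
    case True
    then obtain d0 where d0: "v @ [d0] \<in> verts t" "v @ [d0] \<notin> S"
      by blast
    have "\<forall>d. d \<noteq> d0 \<longrightarrow> v @ [d] \<in> verts t \<longrightarrow> v @ [d] \<in> S"
    proof (intro allI impI)
      fix d assume "d \<noteq> d0" "v @ [d] \<in> verts t"
      moreover have "d = 0 \<or> d = 1" "d0 = 0 \<or> d0 = 1"
        using snoc_in_vertsD \<open>v @ [d] \<in> verts t\<close> d0(1) by fastforce+
      ultimately show "v @ [d] \<in> S"
        using not_two d0 by auto
    qed
    then show ?thesis
      using stage_law_one_untouched[OF p inv d0] that by blast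
  next
    case False
    then have finished: "\<forall>d. v @ [d] \<in> verts t \<longrightarrow> v @ [d] \<in> S"
      by blast
    show ?thesis
    proof (cases "v = []")
      case True
      then have "stage_law p t [] S {} (cost p t [] S) 0"
        using stage_law_finished[OF p] inv finished by simp
      then show ?thesis
        using True that by blast
    next
      case False
      then show ?thesis
        using stage_law_backtrack[OF p inv False finished] that by blast
    qed
  qed
qed

section \<open>The equal branching density\<close>

text \<open>
  The mass of a leaf edge is the product, over the binary vertices on its path, of the
  branching weights \<open>\<tau>(e\<^sub>i) / (\<tau>(e\<^sub>1) + \<tau>(e\<^sub>2))\<close> of the edges taken.\<close>

fun eb_density :: "real \<Rightarrow> btree \<Rightarrow> vtx \<Rightarrow> real" where
  "eb_density p (Node1 s) (0 # w) = (if w = [] then (if s = Leaf then 1 else 0) else eb_density p s w)"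
| "eb_density p (Node2 l r) (0 # w) =
     wt_left p l r * (if w = [] then (if l = Leaf then 1 else 0) else eb_density p l w)"
| "eb_density p (Node2 l r) (Suc 0 # w) =
     wt_right p l r * (if w = [] then (if r = Leaf then 1 else 0) else eb_density p r w)"
| "eb_density p _ _ = 0"

lemma hidden_mass_eq_sum:
  "hidden_mass p t S = (\<Sum>e\<in>edges t. eb_density p t e * (if e \<in> S then 0 else 1))"
proof (induction t arbitrary: S)
  case (Node1 s)
  have "(\<Sum>w\<in>edges s. eb_density p (Node1 s) (0 # w) * (if 0 # w \<in> S then 0 else 1))
      = (\<Sum>w\<in>edges s. eb_density p s w * (if w \<in> child_part 0 S then 0 else 1))"
    by (intro sum.cong) auto
  then show ?case
    unfolding sum_edges_Node1 using Node1.IH[of "child_part 0 S"] by simp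
next
  case (Node2 l r)
  have left: "(\<Sum>w\<in>edges l. eb_density p (Node2 l r) (0 # w) * (if 0 # w \<in> S then 0 else 1))
      = wt_left p l r * (\<Sum>w\<in>edges l. eb_density p l w * (if w \<in> child_part 0 S then 0 else 1))"
    unfolding sum_distrib_left by (intro sum.cong) auto
  have right: "(\<Sum>w\<in>edges r. eb_density p (Node2 l r) (1 # w) * (if 1 # w \<in> S then 0 else 1))
      = wt_right p l r * (\<Sum>w\<in>edges r. eb_density p r w * (if w \<in> child_part 1 S then 0 else 1))"
    unfolding sum_distrib_left by (intro sum.cong) auto
  show ?case
    unfolding sum_edges_Node2 left right
    using Node2.IH(1)[of "child_part 0 S"] Node2.IH(2)[of "child_part 1 S"] by (simp add: algebra_simps)
qed simp

lemma eb_density_nonneg: "0 < p \<Longrightarrow> p \<le> 1 \<Longrightarrow> 0 \<le> eb_density p t x"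
proof (induction p t x rule: eb_density.induct)
  case (2 p l r w)
  then show ?case
    using branch_weights(1)[OF 2(2,3), of l r] by auto
next
  case (3 p l r w)
  then show ?case
    using branch_weights(2)[OF 3(2,3), of l r] by auto
qed auto

lemma eb_density_support: "eb_density p t x \<noteq> 0 \<Longrightarrow> x \<in> edges t \<and> (\<forall>d. x @ [d] \<notin> verts t)"
  by (induction p t x rule: eb_density.induct) (auto simp: in_edges_iff split: if_splits)

lemma sum_eb_density: "0 < p \<Longrightarrow> p \<le> 1 \<Longrightarrow> t \<noteq> Leaf \<Longrightarrow> sum (eb_density p t) (edges t) = 1"
  using hidden_mass_eq_sum[of p t "{}"] untouched_values[of p t "{}"] by simp

lemma sum_verts_eb_density:
  assumes "0 < p" "p \<le> 1"
  shows "(\<Sum>w\<in>verts s. if w = [] then (if s = Leaf then 1 else 0) else eb_density p s w) = 1"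
proof -
  have "(\<Sum>w\<in>edges s. if w = [] then (if s = Leaf then 1 else 0) else eb_density p s w)
      = sum (eb_density p s) (edges s)"
    by (intro sum.cong) auto
  then show ?thesis
    unfolding sum_verts using sum_eb_density[OF assms, of s] by (cases "s = Leaf") auto
qed

lemma notin_leaf_edges_iff: "x \<notin> leaf_edges t \<longleftrightarrow> x \<notin> edges t \<or> (\<exists>d. x @ [d] \<in> verts t)"
  unfolding leaf_edges_def children_def by auto

lemma eb_density_leaf_edges: "x \<notin> leaf_edges t \<Longrightarrow> eb_density p t x = 0"
  using eb_density_support[of p t x] unfolding notin_leaf_edges_iff by blast

lemma Esub_Node2_left: "Esub (Node2 l r) [0] = Cons 0 ` verts l"
  by (auto simp: Esub_def edges_Node2)

lemma Esub_Node2_right: "Esub (Node2 l r) [1] = Cons 1 ` verts r"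
  by (auto simp: Esub_def edges_Node2)

lemma Esub_Node1_Cons: "u \<noteq> [] \<Longrightarrow> Esub (Node1 s) (0 # u) = Cons 0 ` Esub s u"
  by (auto simp: Esub_def edges_Node1 in_edges_iff)

lemma Esub_Node2_Cons_left: "u \<noteq> [] \<Longrightarrow> Esub (Node2 l r) (0 # u) = Cons 0 ` Esub l u"
  by (auto simp: Esub_def edges_Node2 in_edges_iff)

lemma Esub_Node2_Cons_right: "u \<noteq> [] \<Longrightarrow> Esub (Node2 l r) (Suc 0 # u) = Cons 1 ` Esub r u"
  by (auto simp: Esub_def edges_Node2 in_edges_iff)

lemma Nil_notin_Esub: "x \<in> Esub t e \<Longrightarrow> x \<noteq> []"
  by (auto simp: Esub_def)

lemma tau_edge_Node1:
  "tau_edge p (Node1 s) (0 # u) = (if u = [] then tau_branch p s else tau_edge p s u)"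
  by (cases u) (auto simp: tau_edge_def tau_branch_def)

lemma tau_edge_Node2_left:
  "tau_edge p (Node2 l r) (0 # u) = (if u = [] then tau_branch p l else tau_edge p l u)"
  by (cases u) (auto simp: tau_edge_def tau_branch_def)

lemma tau_edge_Node2_right:
  "tau_edge p (Node2 l r) (Suc 0 # u) = (if u = [] then tau_branch p r else tau_edge p r u)"
  by (cases u) (auto simp: tau_edge_def tau_branch_def)

definition branching_balanced :: "real \<Rightarrow> btree \<Rightarrow> (vtx \<Rightarrow> real) \<Rightarrow> bool" where
  "branching_balanced p t \<epsilon> \<longleftrightarrow> (\<forall>v. v @ [0] \<in> verts t \<longrightarrow> v @ [1] \<in> verts t \<longrightarrow>
     sum \<epsilon> (Esub t (v @ [0])) / tau_edge p t (v @ [0])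
       = sum \<epsilon> (Esub t (v @ [1])) / tau_edge p t (v @ [1]))"

lemma branching_balanced_Node1:
  assumes "branching_balanced p (Node1 s) \<epsilon>"
  shows "branching_balanced p s (\<lambda>w. \<epsilon> (0 # w))"
  unfolding branching_balanced_def
proof (intro allI impI)
  fix v assume "v @ [0] \<in> verts s" "v @ [1] \<in> verts s"
  then show "(\<Sum>w\<in>Esub s (v @ [0]). \<epsilon> (0 # w)) / tau_edge p s (v @ [0]) =
      (\<Sum>w\<in>Esub s (v @ [1]). \<epsilon> (0 # w)) / tau_edge p s (v @ [1])"
    using assms[unfolded branching_balanced_def, rule_format, of "0 # v"]
    by (simp add: Esub_Node1_Cons sum_Cons_image tau_edge_Node1)
qed

lemma branching_balanced_Node2_left:
  assumes "branching_balanced p (Node2 l r) \<epsilon>"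
  shows "branching_balanced p l (\<lambda>w. \<epsilon> (0 # w))"
  unfolding branching_balanced_def
proof (intro allI impI)
  fix v assume "v @ [0] \<in> verts l" "v @ [1] \<in> verts l"
  then show "(\<Sum>w\<in>Esub l (v @ [0]). \<epsilon> (0 # w)) / tau_edge p l (v @ [0]) =
      (\<Sum>w\<in>Esub l (v @ [1]). \<epsilon> (0 # w)) / tau_edge p l (v @ [1])"
    using assms[unfolded branching_balanced_def, rule_format, of "0 # v"]
    by (simp add: Esub_Node2_Cons_left sum_Cons_image tau_edge_Node2_left)
qed

lemma branching_balanced_Node2_right:
  assumes "branching_balanced p (Node2 l r) \<epsilon>"
  shows "branching_balanced p r (\<lambda>w. \<epsilon> (1 # w))"
  unfolding branching_balanced_def
proof (intro allI impI)
  fix v assume "v @ [0] \<in> verts r" "v @ [1] \<in> verts r"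
  then show "(\<Sum>w\<in>Esub r (v @ [0]). \<epsilon> (1 # w)) / tau_edge p r (v @ [0]) =
      (\<Sum>w\<in>Esub r (v @ [1]). \<epsilon> (1 # w)) / tau_edge p r (v @ [1])"
    using assms[unfolded branching_balanced_def, rule_format, of "Suc 0 # v"]
    by (simp add: Esub_Node2_Cons_right sum_Cons_image tau_edge_Node2_right)
qed

lemma sum_Esub_Node1:
  "u \<noteq> [] \<Longrightarrow> sum (eb_density p (Node1 s)) (Esub (Node1 s) (0 # u)) = sum (eb_density p s) (Esub s u)"
  unfolding Esub_Node1_Cons sum_Cons_image by (intro sum.cong) (auto dest: Nil_notin_Esub)

lemma sum_Esub_Node2_left:
  "u \<noteq> [] \<Longrightarrow> sum (eb_density p (Node2 l r)) (Esub (Node2 l r) (0 # u))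
    = wt_left p l r * sum (eb_density p l) (Esub l u)"
  unfolding Esub_Node2_Cons_left sum_Cons_image sum_distrib_left
  by (intro sum.cong) (auto dest: Nil_notin_Esub)

lemma sum_Esub_Node2_right:
  "u \<noteq> [] \<Longrightarrow> sum (eb_density p (Node2 l r)) (Esub (Node2 l r) (Suc 0 # u))
    = wt_right p l r * sum (eb_density p r) (Esub r u)"
  unfolding Esub_Node2_Cons_right sum_Cons_image sum_distrib_left
  by (intro sum.cong) (auto dest: Nil_notin_Esub)

lemma branching_balanced_eb_density:
  assumes p: "0 < p" "p \<le> 1"
  shows "branching_balanced p t (eb_density p t)"
proof (induction t)
  case (Node1 s)
  show ?case
    unfolding branching_balanced_def
  proof (intro allI impI)
    fix v assume "v @ [0] \<in> verts (Node1 s)" "v @ [1] \<in> verts (Node1 s)"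
    then obtain v' where v: "v = 0 # v'" "v' @ [0] \<in> verts s" "v' @ [1] \<in> verts s"
      by (cases v) auto
    moreover have "sum (eb_density p s) (Esub s (v' @ [0])) / tau_edge p s (v' @ [0])
        = sum (eb_density p s) (Esub s (v' @ [1])) / tau_edge p s (v' @ [1])"
      using Node1.IH v unfolding branching_balanced_def by blast
    ultimately show "sum (eb_density p (Node1 s)) (Esub (Node1 s) (v @ [0])) / tau_edge p (Node1 s) (v @ [0])
        = sum (eb_density p (Node1 s)) (Esub (Node1 s) (v @ [1])) / tau_edge p (Node1 s) (v @ [1])"
      by (simp add: sum_Esub_Node1 tau_edge_Node1)
  qed
next
  case (Node2 l r)
  show ?case
    unfolding branching_balanced_def
  proof (intro allI impI)
    fix v assume v: "v @ [0] \<in> verts (Node2 l r)" "v @ [1] \<in> verts (Node2 l r)"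
    show "sum (eb_density p (Node2 l r)) (Esub (Node2 l r) (v @ [0])) / tau_edge p (Node2 l r) (v @ [0])
        = sum (eb_density p (Node2 l r)) (Esub (Node2 l r) (v @ [1])) / tau_edge p (Node2 l r) (v @ [1])"
    proof (cases v)
      case Nil
      have "sum (eb_density p (Node2 l r)) (Esub (Node2 l r) [0]) = wt_left p l r"
        "sum (eb_density p (Node2 l r)) (Esub (Node2 l r) [1]) = wt_right p l r"
        unfolding Esub_Node2_left Esub_Node2_right sum_Cons_image
        using sum_verts_eb_density[OF p, of l] sum_verts_eb_density[OF p, of r]
        by (simp_all add: sum_distrib_left[symmetric])
      moreover have "tau_edge p (Node2 l r) [0] = tau_branch p l" "tau_edge p (Node2 l r) [1] = tau_branch p r"
        by (simp_all add: tau_edge_def tau_branch_def)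
      moreover have "wt_left p l r / tau_branch p l = wt_right p l r / tau_branch p r"
        using tau_branch_pos[OF p, of l] tau_branch_pos[OF p, of r] by (simp add: wt_left_def wt_right_def)
      ultimately show ?thesis
        using Nil by simp
    next
      case (Cons a v')
      then consider "a = 0" "v' @ [0] \<in> verts l" "v' @ [1] \<in> verts l"
        | "a = 1" "v' @ [0] \<in> verts r" "v' @ [1] \<in> verts r"
        using v by auto
      then show ?thesis
      proof cases
        case 1
        have "sum (eb_density p l) (Esub l (v' @ [0])) / tau_edge p l (v' @ [0])
            = sum (eb_density p l) (Esub l (v' @ [1])) / tau_edge p l (v' @ [1])"
          using Node2.IH(1) 1 unfolding branching_balanced_def by blast
        then show ?thesis
          unfolding Cons 1(1) by (simp add: sum_Esub_Node2_left tau_edge_Node2_left)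
            (metis times_divide_eq_right)
      next
        case 2
        have "sum (eb_density p r) (Esub r (v' @ [0])) / tau_edge p r (v' @ [0])
            = sum (eb_density p r) (Esub r (v' @ [1])) / tau_edge p r (v' @ [1])"
          using Node2.IH(2) 2 unfolding branching_balanced_def by blast
        then show ?thesis
          unfolding Cons 2(1) One_nat_def by (simp add: sum_Esub_Node2_right tau_edge_Node2_right)
            (metis times_divide_eq_right)
      qed
    qed
  qed
qed (simp add: branching_balanced_def)

lemma leaf_supported_child:
  assumes leaf: "\<forall>x. x \<notin> leaf_edges t \<longrightarrow> \<epsilon> x = 0" and s: "s \<noteq> Leaf"
    and child: "\<And>w. d0 # w \<in> verts t \<longleftrightarrow> w \<in> verts s"
  shows "\<forall>x. x \<notin> leaf_edges s \<longrightarrow> \<epsilon> (d0 # x) = 0"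
proof (intro allI impI)
  fix x assume x: "x \<notin> leaf_edges s"
  show "\<epsilon> (d0 # x) = 0"
  proof (cases "x = []")
    case True
    have "[d0] @ [0] \<in> verts t"
      using child first_child_in_verts[OF s] by simp
    then have "[d0] \<notin> leaf_edges t"
      unfolding notin_leaf_edges_iff by blast
    then show ?thesis
      using leaf True by simp
  next
    case False
    from x have "x \<notin> edges s \<or> (\<exists>d. x @ [d] \<in> verts s)"
      unfolding notin_leaf_edges_iff .
    then have "d0 # x \<notin> edges t \<or> (\<exists>d. (d0 # x) @ [d] \<in> verts t)"
      using child False by (simp add: in_edges_iff)
    then show ?thesis
      using leaf unfolding notin_leaf_edges_iff by blast
  qed
qed

lemma leaf_supported_child_eq:
  assumes leaf: "\<forall>x. x \<notin> leaf_edges t \<longrightarrow> \<epsilon> x = 0"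
    and child: "\<And>w. d0 # w \<in> verts t \<longleftrightarrow> w \<in> verts s"
    and IH: "\<forall>x. x \<notin> leaf_edges s \<longrightarrow> \<epsilon> (d0 # x) = 0 \<Longrightarrow>
      \<epsilon> (d0 # w) = (\<Sum>u\<in>edges s. \<epsilon> (d0 # u)) * eb_density p s w"
    and w: "w \<in> verts s"
  shows "\<epsilon> (d0 # w) = (\<Sum>u\<in>verts s. \<epsilon> (d0 # u))
      * (if w = [] then (if s = Leaf then 1 else 0) else eb_density p s w)"
proof (cases "s = Leaf")
  case True
  then show ?thesis
    using w by simp
next
  case False
  have "[d0] \<in> edges t" "[d0] @ [0] \<in> verts t"
    using child first_child_in_verts[OF False] by (auto simp: in_edges_iff)
  then have "\<epsilon> [d0] = 0"
    using leaf unfolding notin_leaf_edges_iff by blast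
  then show ?thesis
    using IH[OF leaf_supported_child[OF leaf False child]] False unfolding sum_verts by simp
qed

lemma balanced_eq_eb_density:
  assumes p: "0 < p" "p \<le> 1"
  shows "\<forall>x. x \<notin> leaf_edges t \<longrightarrow> \<epsilon> x = 0 \<Longrightarrow> branching_balanced p t \<epsilon>
    \<Longrightarrow> \<epsilon> x = sum \<epsilon> (edges t) * eb_density p t x"
proof (induction t arbitrary: \<epsilon> x)
  case Leaf
  then show ?case
    by (simp add: leaf_edges_def)
next
  case (Node1 s)
  show ?case
  proof (cases "x \<in> edges (Node1 s)")
    case False
    then have "x \<notin> leaf_edges (Node1 s)"
      unfolding notin_leaf_edges_iff by blast
    then show ?thesis
      using Node1.prems(1) eb_density_leaf_edges[of x "Node1 s" p] by simp
  next
    case True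
    then obtain w where x: "x = 0 # w" "w \<in> verts s"
      by (auto simp: edges_Node1)
    have "\<epsilon> (0 # w) = (\<Sum>u\<in>verts s. \<epsilon> (0 # u))
        * (if w = [] then (if s = Leaf then 1 else 0) else eb_density p s w)"
      by (rule leaf_supported_child_eq[OF Node1.prems(1) _ _ x(2)])
        (simp, rule Node1.IH[of "\<lambda>u. \<epsilon> (0 # u)", OF _ branching_balanced_Node1[OF Node1.prems(2)]])
    then show ?thesis
      unfolding x(1) edges_Node1 sum_Cons_image by simp
  qed
next
  case (Node2 l r)
  define A where "A = (\<Sum>u\<in>verts l. \<epsilon> (0 # u))"
  define B where "B = (\<Sum>u\<in>verts r. \<epsilon> (1 # u))"
  have total: "sum \<epsilon> (edges (Node2 l r)) = A + B"
    unfolding A_def B_def sum_edges_Node2 sum_verts by simp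
  have "[] @ [0] \<in> verts (Node2 l r)" "[] @ [1] \<in> verts (Node2 l r)"
    by simp_all
  from Node2.prems(2)[unfolded branching_balanced_def, rule_format, OF this]
  have "A / tau_branch p l = B / tau_branch p r"
    unfolding append_Nil Esub_Node2_left Esub_Node2_right sum_Cons_image A_def B_def
    by (simp add: tau_edge_def tau_branch_def)
  then have AB: "A = sum \<epsilon> (edges (Node2 l r)) * wt_left p l r"
      "B = sum \<epsilon> (edges (Node2 l r)) * wt_right p l r"
    using tau_branch_pos[OF p, of l] tau_branch_pos[OF p, of r]
    unfolding total wt_left_def wt_right_def by (simp_all add: field_simps)
  show ?case
  proof (cases "x \<in> edges (Node2 l r)")
    case False
    then have "x \<notin> leaf_edges (Node2 l r)"
      unfolding notin_leaf_edges_iff by blast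
    then show ?thesis
      using Node2.prems(1) eb_density_leaf_edges[of x "Node2 l r" p] by simp
  next
    case True
    then consider (left) w where "x = 0 # w" "w \<in> verts l" | (right) w where "x = 1 # w" "w \<in> verts r"
      by (auto simp: edges_Node2)
    then show ?thesis
    proof cases
      case left
      have "\<epsilon> (0 # w) = A * (if w = [] then (if l = Leaf then 1 else 0) else eb_density p l w)"
        unfolding A_def by (rule leaf_supported_child_eq[OF Node2.prems(1) _ _ left(2)])
          (simp, rule Node2.IH(1)[of "\<lambda>u. \<epsilon> (0 # u)",
            OF _ branching_balanced_Node2_left[OF Node2.prems(2)]])
      then show ?thesis
        unfolding left(1) AB by simp
    next
      case right
      have "\<epsilon> (1 # w) = B * (if w = [] then (if r = Leaf then 1 else 0) else eb_density p r w)"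
        unfolding B_def by (rule leaf_supported_child_eq[OF Node2.prems(1) _ _ right(2)])
          (simp, rule Node2.IH(2)[of "\<lambda>u. \<epsilon> (1 # u)",
            OF _ branching_balanced_Node2_right[OF Node2.prems(2)]])
      then show ?thesis
        unfolding right(1) AB by simp
    qed
  qed
qed

lemma eb_density_equal_branching:
  assumes p: "0 < p" "p \<le> 1" and t: "t \<noteq> Leaf"
  shows "is_equal_branching p t (eb_density p t)"
  unfolding is_equal_branching_def is_edge_dist_def
proof (intro conjI allI impI)
  fix x
  show "0 \<le> eb_density p t x"
    by (rule eb_density_nonneg[OF p])
next
  fix x assume "x \<notin> edges t"
  then show "eb_density p t x = 0"
    using eb_density_support by blast
next
  show "sum (eb_density p t) (edges t) = 1"
    by (rule sum_eb_density[OF p t])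
next
  fix x assume "x \<notin> leaf_edges t"
  then show "eb_density p t x = 0"
    by (rule eb_density_leaf_edges)
next
  fix v e1 e2 assume "v \<in> verts t \<and> e1 \<in> children t v \<and> e2 \<in> children t v \<and> e1 \<noteq> e2"
  then obtain d1 d2 where d: "e1 = v @ [d1]" "e2 = v @ [d2]" "v @ [d1] \<in> verts t"
      "v @ [d2] \<in> verts t" "d1 \<noteq> d2"
    unfolding children_iff by blast
  moreover have "d1 \<le> 1" "d2 \<le> 1"
    using snoc_in_vertsD[OF d(3)] snoc_in_vertsD[OF d(4)] by auto
  ultimately have "(d1 = 0 \<and> d2 = 1) \<or> (d1 = 1 \<and> d2 = 0)"
    by auto
  then show "sum (eb_density p t) (Esub t e1) / tau_edge p t e1
      = sum (eb_density p t) (Esub t e2) / tau_edge p t e2"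
    using branching_balanced_eb_density[OF p, of t] d unfolding branching_balanced_def by auto
qed

lemma equal_branching_unique:
  assumes p: "0 < p" "p \<le> 1" and eb: "is_equal_branching p t \<epsilon>"
  shows "\<epsilon> = eb_density p t"
proof
  fix x
  have "branching_balanced p t \<epsilon>"
    unfolding branching_balanced_def
  proof (intro allI impI)
    fix v assume v: "v @ [0] \<in> verts t" "v @ [1] \<in> verts t"
    then have "v \<in> verts t" "v @ [0] \<in> children t v" "v @ [1] \<in> children t v"
      using snoc_in_vertsD[OF v(1)] unfolding children_iff by auto
    moreover have "v @ [0] \<noteq> v @ [1]"
      by simp
    ultimately show "sum \<epsilon> (Esub t (v @ [0])) / tau_edge p t (v @ [0])
        = sum \<epsilon> (Esub t (v @ [1])) / tau_edge p t (v @ [1])"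
      using eb unfolding is_equal_branching_def by blast
  qed
  then show "\<epsilon> x = eb_density p t x"
    using balanced_eq_eb_density[OF p, of t \<epsilon> x] eb
    unfolding is_equal_branching_def is_edge_dist_def by simp
qed

lemma eps_star_eq_eb_density: "0 < p \<Longrightarrow> p \<le> 1 \<Longrightarrow> t \<noteq> Leaf \<Longrightarrow> eps_star p t = eb_density p t"
  unfolding eps_star_def using eb_density_equal_branching equal_branching_unique
  by (intro the_equality) auto

section \<open>Expected cost along the search\<close>

lemma dfs_inv_reachable:
  assumes p: "0 < p" "p \<le> 1" and dfs: "is_dfs t \<sigma>"
  shows "\<forall>h\<in>set_pmf (hist_dist t p \<sigma> n). dfs_inv t (pos h) (traversed h)"
proof (induction n)
  case 0
  then show ?case
    using dfs_inv_start by simp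
next
  case (Suc n)
  show ?case
  proof
    fix h' assume "h' \<in> set_pmf (hist_dist t p \<sigma> (Suc n))"
    then obtain h A x where h: "h \<in> set_pmf (hist_dist t p \<sigma> n)" and x: "x \<in> set_pmf (\<sigma> h A)"
      and h': "h' = h @ [(A, x)]"
      by auto
    have inv: "dfs_inv t (pos h) (traversed h)"
      using Suc h by auto
    obtain Ks a b where "stage_law p t (pos h) (traversed h) Ks a b"
      using stage_law_exists[OF p inv] .
    moreover have "x \<in> dfs_moves t (pos h) (traversed h) A"
      using dfs x unfolding is_dfs_def by auto
    ultimately show "dfs_inv t (pos h') (traversed h')"
      unfolding h' traversed_snoc pos_snoc stage_law_def by blast
  qed
qed

lemma expected_next_cost:
  assumes p: "0 < p" "p \<le> 1" and dfs: "is_dfs t \<sigma>" and inv: "dfs_inv t (pos h) (traversed h)"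
  shows "(\<integral>\<^sup>+A. \<integral>\<^sup>+x. ennreal (cost p t (pos (h @ [(A, x)])) (traversed (h @ [(A, x)]))) \<partial>\<sigma> h A \<partial>act_pmf t p)
    + ennreal (hidden_mass p t (traversed h)) = ennreal (cost p t (pos h) (traversed h))"
proof -
  obtain Ks a b where law: "stage_law p t (pos h) (traversed h) Ks a b"
    using stage_law_exists[OF p inv] .
  then have Ks: "Ks \<subseteq> edges t" and ab: "0 \<le> a" "0 \<le> b"
    and sum: "a + b * (1 - p) ^ card Ks + hidden_mass p t (traversed h) = cost p t (pos h) (traversed h)"
    unfolding stage_law_def by auto
  have "(\<integral>\<^sup>+x. ennreal (cost p t (pos (h @ [(A, x)])) (traversed (h @ [(A, x)]))) \<partial>\<sigma> h A)
      = ennreal (if A \<in> {A. A \<inter> Ks = {}} then a + b else a)" for A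
  proof -
    have "AE x in measure_pmf (\<sigma> h A). ennreal (cost p t (pos (h @ [(A, x)])) (traversed (h @ [(A, x)])))
        = ennreal (if A \<in> {A. A \<inter> Ks = {}} then a + b else a)"
      unfolding AE_measure_pmf_iff
    proof
      fix x assume "x \<in> set_pmf (\<sigma> h A)"
      then have "x \<in> dfs_moves t (pos h) (traversed h) A"
        using dfs unfolding is_dfs_def by blast
      then have "cost p t x (traversed h \<union> crossed (pos h) x) = (if A \<inter> Ks = {} then a + b else a)"
        using law unfolding stage_law_def by blast
      then show "ennreal (cost p t (pos (h @ [(A, x)])) (traversed (h @ [(A, x)])))
          = ennreal (if A \<in> {A. A \<inter> Ks = {}} then a + b else a)"
        by (simp add: traversed_snoc)
    qed
    then have "(\<integral>\<^sup>+x. ennreal (cost p t (pos (h @ [(A, x)])) (traversed (h @ [(A, x)]))) \<partial>\<sigma> h A)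
        = (\<integral>\<^sup>+x. ennreal (if A \<in> {A. A \<inter> Ks = {}} then a + b else a) \<partial>\<sigma> h A)"
      by (rule nn_integral_cong_AE)
    then show ?thesis
      by (simp add: measure_pmf.emeasure_space_1)
  qed
  then have "(\<integral>\<^sup>+A. \<integral>\<^sup>+x. ennreal (cost p t (pos (h @ [(A, x)])) (traversed (h @ [(A, x)]))) \<partial>\<sigma> h A \<partial>act_pmf t p)
      = ennreal (a + b * (1 - p) ^ card Ks)"
    using nn_integral_pmf_if[OF ab, of "act_pmf t p" "{A. A \<inter> Ks = {}}"] prob_all_inactive[OF Ks, of p] p
    by simp
  moreover have "0 \<le> b * (1 - p) ^ card Ks" "0 \<le> hidden_mass p t (traversed h)"
    using ab p hidden_mass_bounds[OF p] by auto
  ultimately show ?thesis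
    using sum ab by (simp only: ennreal_plus[symmetric] add_nonneg_nonneg)
qed

definition exp_cost :: "btree \<Rightarrow> real \<Rightarrow> strategy \<Rightarrow> nat \<Rightarrow> ennreal" where
  "exp_cost t p \<sigma> n = (\<integral>\<^sup>+h. ennreal (cost p t (pos h) (traversed h)) \<partial>hist_dist t p \<sigma> n)"

definition exp_hidden :: "btree \<Rightarrow> real \<Rightarrow> strategy \<Rightarrow> nat \<Rightarrow> ennreal" where
  "exp_hidden t p \<sigma> n = (\<integral>\<^sup>+h. ennreal (hidden_mass p t (traversed h)) \<partial>hist_dist t p \<sigma> n)"

lemma exp_cost_0: "0 < p \<Longrightarrow> p \<le> 1 \<Longrightarrow> exp_cost t p \<sigma> 0 = ennreal (fresh_cost p t)"
  unfolding exp_cost_def using untouched_values[of p t "{}"] by simp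

lemma exp_cost_Suc:
  assumes p: "0 < p" "p \<le> 1" and dfs: "is_dfs t \<sigma>"
  shows "exp_cost t p \<sigma> (Suc n) + exp_hidden t p \<sigma> n = exp_cost t p \<sigma> n"
proof -
  have "exp_cost t p \<sigma> (Suc n) + exp_hidden t p \<sigma> n =
    (\<integral>\<^sup>+h. (\<integral>\<^sup>+A. \<integral>\<^sup>+x. ennreal (cost p t (pos (h @ [(A, x)])) (traversed (h @ [(A, x)])))
        \<partial>\<sigma> h A \<partial>act_pmf t p) + ennreal (hidden_mass p t (traversed h)) \<partial>hist_dist t p \<sigma> n)"
    unfolding exp_cost_def exp_hidden_def by (simp add: nn_integral_add)
  also have "\<dots> = exp_cost t p \<sigma> n"
    unfolding exp_cost_def using expected_next_cost[OF p dfs] dfs_inv_reachable[OF p dfs, of n]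
    by (intro nn_integral_cong_AE) (simp add: AE_measure_pmf_iff)
  finally show ?thesis .
qed

lemma exp_hidden_le_1: "0 < p \<Longrightarrow> p \<le> 1 \<Longrightarrow> exp_hidden t p \<sigma> n \<le> 1"
proof -
  assume p: "0 < p" "p \<le> 1"
  have "exp_hidden t p \<sigma> n \<le> (\<integral>\<^sup>+h. 1 \<partial>hist_dist t p \<sigma> n)"
    unfolding exp_hidden_def using hidden_mass_bounds[OF p] by (intro nn_integral_mono) simp
  then show ?thesis
    by (simp add: measure_pmf.emeasure_space_1)
qed

lemma exp_cost_le:
  assumes p: "0 < p" "p \<le> 1" and dfs: "is_dfs t \<sigma>"
  shows "exp_cost t p \<sigma> n \<le> ennreal (cost_bound p t) * exp_hidden t p \<sigma> n"
proof -
  have "exp_cost t p \<sigma> n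
      \<le> (\<integral>\<^sup>+h. ennreal (cost_bound p t) * ennreal (hidden_mass p t (traversed h)) \<partial>hist_dist t p \<sigma> n)"
    unfolding exp_cost_def
  proof (rule nn_integral_mono_AE, unfold AE_measure_pmf_iff, intro ballI)
    fix h assume "h \<in> set_pmf (hist_dist t p \<sigma> n)"
    then have "cost p t (pos h) (traversed h) \<le> cost_bound p t * hidden_mass p t (traversed h)"
      using dfs_inv_reachable[OF p dfs] cost_bounds[OF p] by blast
    then show "ennreal (cost p t (pos h) (traversed h))
        \<le> ennreal (cost_bound p t) * ennreal (hidden_mass p t (traversed h))"
      using cost_bound_nonneg[OF p] hidden_mass_bounds[OF p]
      by (simp add: ennreal_mult[symmetric] ennreal_leI)
  qed
  also have "\<dots> = ennreal (cost_bound p t) * exp_hidden t p \<sigma> n"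
    unfolding exp_hidden_def by (rule nn_integral_cmult) simp
  finally show ?thesis .
qed

lemma telescoping_sums:
  fixes r \<beta> :: "nat \<Rightarrow> real"
  assumes step: "\<And>k. \<beta> (Suc k) + r k = \<beta> k"
    and nonneg: "\<And>k. 0 \<le> r k" "\<And>k. 0 \<le> \<beta> k"
    and dominated: "\<And>k. \<beta> k \<le> c * r k"
  shows "r sums \<beta> 0"
proof -
  have partial: "(\<Sum>k<n. r k) = \<beta> 0 - \<beta> n" for n
  proof (induction n)
    case (Suc n)
    then show ?case
      using step[of n] by simp
  qed simp
  have "summable r"
    by (rule summableI_nonneg_bounded[where x = "\<beta> 0"]) (use nonneg partial in auto)
  then have lim: "(\<lambda>k. c * r k) \<longlonglongrightarrow> 0"
    using tendsto_mult_right_zero summable_LIMSEQ_zero by blast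
  have "\<beta> \<longlonglongrightarrow> 0"
  proof (rule tendsto_sandwich[OF _ _ tendsto_const lim])
    show "\<forall>\<^sub>F k in sequentially. 0 \<le> \<beta> k" "\<forall>\<^sub>F k in sequentially. \<beta> k \<le> c * r k"
      using nonneg(2) dominated by simp_all
  qed
  then have "(\<lambda>n. \<beta> 0 - \<beta> n) \<longlonglongrightarrow> \<beta> 0"
    using tendsto_diff[OF tendsto_const, of \<beta> 0 sequentially "\<beta> 0"] by simp
  then show ?thesis
    unfolding sums_def partial .
qed

lemma suminf_exp_hidden:
  assumes p: "0 < p" "p \<le> 1" and dfs: "is_dfs t \<sigma>"
  shows "(\<Sum>k. exp_hidden t p \<sigma> k) = ennreal (fresh_cost p t)"
proof -
  define r where "r k = enn2real (exp_hidden t p \<sigma> k)" for k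
  define \<beta> where "\<beta> k = enn2real (exp_cost t p \<sigma> k)" for k
  have hidden_fin: "exp_hidden t p \<sigma> k < top" for k
    using exp_hidden_le_1[OF p, of t \<sigma> k] by (rule order_le_less_trans) simp
  have cost_fin: "exp_cost t p \<sigma> k < top" for k
  proof -
    have "exp_cost t p \<sigma> k \<le> ennreal (cost_bound p t) * exp_hidden t p \<sigma> k"
      by (rule exp_cost_le[OF p dfs])
    also have "\<dots> < top"
      using hidden_fin[of k] by (simp add: ennreal_mult_less_top)
    finally show ?thesis .
  qed
  have hidden: "exp_hidden t p \<sigma> k = ennreal (r k)" for k
    using hidden_fin unfolding r_def by simp
  have r_nonneg: "0 \<le> r k" for k
    unfolding r_def by simp
  have "r sums \<beta> 0"
  proof (rule telescoping_sums)
    show "\<beta> (Suc k) + r k = \<beta> k" for k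
    proof -
      have "\<beta> k = enn2real (exp_cost t p \<sigma> (Suc k) + exp_hidden t p \<sigma> k)"
        unfolding \<beta>_def using exp_cost_Suc[OF p dfs] by simp
      also have "\<dots> = \<beta> (Suc k) + r k"
        unfolding \<beta>_def r_def by (rule enn2real_plus[OF cost_fin hidden_fin])
      finally show ?thesis
        by simp
    qed
    show "\<beta> k \<le> cost_bound p t * r k" for k
    proof -
      have "exp_cost t p \<sigma> k \<le> ennreal (cost_bound p t * r k)"
        using exp_cost_le[OF p dfs, of k] unfolding hidden
        by (simp add: ennreal_mult[OF cost_bound_nonneg[OF p] r_nonneg])
      then have "\<beta> k \<le> enn2real (ennreal (cost_bound p t * r k))"
        unfolding \<beta>_def by (rule enn2real_mono) simp
      then show ?thesis
        using cost_bound_nonneg[OF p] r_nonneg[of k] by simp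
    qed
  qed (simp_all add: r_nonneg \<beta>_def)
  then have "(\<Sum>k. ennreal (r k)) = ennreal (\<beta> 0)"
    by (rule suminf_ennreal_eq[OF r_nonneg])
  then show ?thesis
    using exp_cost_0[OF p] fresh_cost_nonneg[OF p] unfolding hidden[symmetric] \<beta>_def by simp
qed

lemma payoff_eb_density:
  assumes p: "0 < p" "p \<le> 1"
  shows "payoff t p (eb_density p t) \<sigma> = (\<Sum>k. exp_hidden t p \<sigma> k)"
proof -
  define f where "f e k = ennreal (eb_density p t e) *
      ennreal (measure_pmf.prob (hist_dist t p \<sigma> k) {h. e \<notin> traversed h})" for e k
  have "exp_hidden t p \<sigma> k = (\<Sum>e\<in>edges t. f e k)" for k
  proof -
    have "exp_hidden t p \<sigma> k = (\<integral>\<^sup>+h. (\<Sum>e\<in>edges t. ennreal (eb_density p t e)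
        * indicator {h. e \<notin> traversed h} h) \<partial>hist_dist t p \<sigma> k)"
      unfolding exp_hidden_def hidden_mass_eq_sum
    proof (intro nn_integral_cong)
      fix h
      have "ennreal (\<Sum>e\<in>edges t. eb_density p t e * (if e \<in> traversed h then 0 else 1))
          = (\<Sum>e\<in>edges t. ennreal (eb_density p t e * (if e \<in> traversed h then 0 else 1)))"
        using eb_density_nonneg[OF p] by (intro sum_ennreal[symmetric]) simp
      also have "\<dots> = (\<Sum>e\<in>edges t. ennreal (eb_density p t e) * indicator {h. e \<notin> traversed h} h)"
        by (intro sum.cong) (auto simp: indicator_def)
      finally show "ennreal (\<Sum>e\<in>edges t. eb_density p t e * (if e \<in> traversed h then 0 else 1))
          = (\<Sum>e\<in>edges t. ennreal (eb_density p t e) * indicator {h. e \<notin> traversed h} h)" .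
    qed
    also have "\<dots> = (\<Sum>e\<in>edges t. \<integral>\<^sup>+h. ennreal (eb_density p t e)
        * indicator {h. e \<notin> traversed h} h \<partial>hist_dist t p \<sigma> k)"
      by (rule nn_integral_sum) simp
    also have "\<dots> = (\<Sum>e\<in>edges t. f e k)"
      unfolding f_def by (intro sum.cong refl)
        (simp add: nn_integral_cmult_indicator measure_pmf.emeasure_eq_measure)
    finally show ?thesis .
  qed
  then have "(\<Sum>k. exp_hidden t p \<sigma> k) = (\<Sum>e\<in>edges t. \<Sum>k. f e k)"
    by (simp add: suminf_sum)
  then show ?thesis
    unfolding payoff_def exp_time_def f_def by (simp add: ennreal_suminf_cmult)
qed

theorem mainTheorem9:
  fixes t :: btree and p :: real and \<sigma> :: strategy
  assumes "t \<noteq> Leaf" and "0 < p" and "p \<le> 1" and "is_dfs t \<sigma>"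
  shows "payoff t p (eps_star p t) \<sigma> = ennreal (tau p t / 2 + Lam p t)"
proof -
  have "payoff t p (eps_star p t) \<sigma> = payoff t p (eb_density p t) \<sigma>"
    using eps_star_eq_eb_density[OF assms(2,3,1)] by simp
  also have "\<dots> = (\<Sum>k. exp_hidden t p \<sigma> k)"
    by (rule payoff_eb_density[OF assms(2,3)])
  also have "\<dots> = ennreal (fresh_cost p t)"
    by (rule suminf_exp_hidden[OF assms(2,3,4)])
  also have "\<dots> = ennreal (tau p t / 2 + Lam p t)"
    using fresh_cost_eq_tau_Lam[OF assms(2,3)] by simp
  finally show ?thesis .
qed

end
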